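(* Let $$X_\infty=\Big(\sum_{k\ge1}\varepsilon_k\prod_{j=1}^k\theta_j^\alpha\Big)^{1/\alpha}.$$ Then $X_\infty$ is finite almost surely and $X_\infty\overset{d}{=}\theta_0(\varepsilon_0+X_\infty^\alpha)^{1/\alpha}$, where $X_\infty,\theta_0,\varepsilon_0$ are independent, $\theta_0\overset{d}{=}\theta_1$, $\varepsilon_0\overset{d}{=}\varepsilon_1$. Moreover $0\le \mathbb E\theta_0^\alpha<1$ and $$\mathbb E X_\infty^\alpha=\frac{\mathbb E\theta_0^\alpha}{1-\mathbb E\theta_0^\alpha},$$ the distribution $\mu_*$ of $X_\infty$ is absolutely continuous with respect to $m(dx)=x\,dx$ with density $f_*$ that is strictly positive a.e. on $(0,\infty)$, and $\mu_*$ is the unique stationary distribution of the Markov chain $(X_n)_{n\ge0}$ defined by $X_n=\theta_n(\varepsilon_n+X_{n-1}^\alpha)^{1/\alpha}$, $n\ge1$.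
   Context: Fix $\alpha>0$ and a Borel function $h\colon(0,1)\to[0,\infty)$ with $\int_0^1 h(r)r\,dr=1$. $(\varepsilon_n)_{n\ge1}$ and $(\theta_n)_{n\ge1}$ are independent sequences of independent random variables, with $\varepsilon_n$ exponentially distributed with mean $1$ and $\theta_n$ identically distributed on $(0,1)$ with distribution function $H(r)=P(\theta_n\le r)=\int_0^r h(z)z\,dz$. In the chain $(X_n)$, $X_0$ is a positive random variable independent of all $\varepsilon_n,\theta_n$. *)

theory Defs
  imports "HOL-Probability.Probability"
begin

definition step_map :: "real \<Rightarrow> real \<times> real \<times> real \<Rightarrow> real" where
  "step_map \<alpha> = (\<lambda>(x, t, e). t * (e + x powr \<alpha>) powr (1 / \<alpha>))"

definition Exp1 :: "real measure" where
  "Exp1 = density lborel (\<lambda>x. ennreal (exponential_density 1 x))"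

text \<open>nu is a stationary distribution (on the state space (0,infinity)) of the chain
  X_n = theta_n (eps_n + X_{n-1}^alpha)^(1/alpha), where theta_n ~ Theta and eps_n ~ Exp(1):
  if X_{n-1} ~ nu is independent of theta_n, eps_n, then X_n ~ nu.\<close>
definition stationary_dist :: "real \<Rightarrow> real measure \<Rightarrow> real measure \<Rightarrow> bool" where
  "stationary_dist \<alpha> Theta \<nu> \<longleftrightarrow>
     prob_space \<nu> \<and> sets \<nu> = sets borel \<and> emeasure \<nu> {0<..} = 1 \<and>
     distr (\<nu> \<Otimes>\<^sub>M (Theta \<Otimes>\<^sub>M Exp1)) borel (step_map \<alpha>) = \<nu>"

text \<open>The k-th term (k = 1, 2, ...) of the series defining X_infinity, indexed from 0:
  term k = eps_{k+1} * prod_{j=1}^{k+1} theta_j^alpha.\<close>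
definition Xterm :: "real \<Rightarrow> (nat \<Rightarrow> 'a \<Rightarrow> real) \<Rightarrow> (nat \<Rightarrow> 'a \<Rightarrow> real) \<Rightarrow> 'a \<Rightarrow> nat \<Rightarrow> real" where
  "Xterm \<alpha> eps theta x k = eps (Suc k) x * (\<Prod>j\<in>{1..Suc k}. theta j x powr \<alpha>)"

definition Xinf :: "real \<Rightarrow> (nat \<Rightarrow> 'a \<Rightarrow> real) \<Rightarrow> (nat \<Rightarrow> 'a \<Rightarrow> real) \<Rightarrow> 'a \<Rightarrow> real" where
  "Xinf \<alpha> eps theta x = (\<Sum>k. Xterm \<alpha> eps theta x k) powr (1 / \<alpha>)"

end

theory Submission
  imports Defs
begin

text \<open>Write \<open>S = X\<^sub>\<infinity>\<^sup>\<alpha> = \<Sum>\<^sub>k \<epsilon>\<^sub>k \<Prod>\<^sub>j\<^sub>\<le>\<^sub>k \<theta>\<^sub>j\<^sup>\<alpha>\<close>. By independence the \<open>k\<close>-th term has mean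
  \<open>m\<^sup>k\<close> with \<open>m = E \<theta>\<^sup>\<alpha> < 1\<close>, so \<open>E S = m / (1 - m)\<close> and \<open>S\<close> is a.s. finite. Splitting off
  the first factor gives \<open>S = \<theta>\<^sub>1\<^sup>\<alpha> (\<epsilon>\<^sub>1 + S')\<close>, where \<open>S'\<close> is the same series built from the
  shifted sequences; \<open>S'\<close> has the law of \<open>S\<close> and is independent of \<open>(\<theta>\<^sub>1, \<epsilon>\<^sub>1)\<close>, which is
  stationarity.

  From any starting law, one step of the chain produces a law with a density with respect
  to \<open>x dx\<close>, because \<open>\<theta>\<close> has one. A stationary law charges every interval \<open>(0, y]\<close>: otherwise
  a step with small \<open>\<theta>\<close> and small \<open>\<epsilon>\<close> would move mass from just above the left end \<open>c\<close> of
  its support strictly below \<open>c\<close>. This makes the density positive.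

  For uniqueness, the characteristic function \<open>\<phi>\<close> of the image of a stationary law under
  \<open>x \<mapsto> x\<^sup>\<alpha>\<close> satisfies \<open>\<phi>(s) = E[\<psi>(s \<theta>\<^sup>\<alpha>) \<phi>(s \<theta>\<^sup>\<alpha>)]\<close> with \<open>\<psi>\<close> the characteristic function
  of \<open>Exp(1)\<close>. Hence the difference \<open>D\<close> of two such functions satisfies
  \<open>|D(s)| \<le> E |D(s \<theta>\<^sup>\<alpha>)|\<close>, which at a point of maximal \<open>|D|\<close> of least modulus forces \<open>D = 0\<close>.\<close>

lemma emeasure_density_pos:
  fixes f :: "real \<Rightarrow> ennreal"
  assumes f[measurable]: "f \<in> borel_measurable borel" and A[measurable]: "A \<in> sets borel"
    and pos: "\<And>x. x \<in> A \<Longrightarrow> 0 < f x" and L: "emeasure lborel A > 0"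
  shows "0 < emeasure (density lborel f) A"
proof (rule ccontr)
  assume "\<not> 0 < emeasure (density lborel f) A"
  then have "(\<integral>\<^sup>+ x. f x * indicator A x \<partial>lborel) = 0"
    by (subst (asm) emeasure_density) (auto simp: zero_less_iff_neq_zero)
  then have "AE x in lborel. f x * indicator A x = 0"
    by (subst (asm) nn_integral_0_iff_AE) auto
  then have "AE x in lborel. x \<notin> A"
    by (rule eventually_mono) (use pos in \<open>fastforce simp: indicator_def split: if_splits\<close>)
  then have "emeasure lborel A = 0"
    by (subst (asm) AE_iff_measurable[of A]) auto
  with L show False by simp
qed

lemma nn_integral_pos_on_subinterval:
  fixes f :: "real \<Rightarrow> real"
  assumes [measurable]: "f \<in> borel_measurable borel"
    and pos: "(\<integral>\<^sup>+ t. ennreal (indicator {0<..<1} t * f t) \<partial>lborel) \<noteq> 0"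
  shows "\<exists>a b. 0 < a \<and> a < b \<and> b < 1 \<and> 0 < (\<integral>\<^sup>+t. ennreal (f t * indicator {a..b} t) \<partial>lborel)"
proof (rule ccontr)
  assume "\<not> ?thesis"
  then have z: "(\<integral>\<^sup>+t. ennreal (f t * indicator {a..b} t) \<partial>lborel) = 0"
    if "0 < a" "a < b" "b < 1" for a b using that by (auto simp: zero_less_iff_neq_zero)
  define I where "I n = {1 / (real n + 3) .. 1 - 1 / (real n + 3)}" for n
  have "AE t in lborel. ennreal (f t * indicator (I n) t) = 0" for n
  proof -
    have "1 / (real n + 3) < 1 - 1 / (real n + 3)" by (simp add: field_simps)
    then have "(\<integral>\<^sup>+t. ennreal (f t * indicator (I n) t) \<partial>lborel) = 0"
      unfolding I_def by (intro z) auto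
    then show ?thesis by (subst (asm) nn_integral_0_iff_AE) (auto simp: I_def)
  qed
  then have "AE t in lborel. \<forall>n. ennreal (f t * indicator (I n) t) = 0"
    by (simp add: AE_all_countable)
  then have "AE t in lborel. ennreal (indicator {0<..<1} t * f t) = 0"
  proof (rule eventually_mono)
    fix t assume H: "\<forall>n. ennreal (f t * indicator (I n) t) = 0"
    show "ennreal (indicator {0<..<1} t * f t) = 0"
    proof (cases "0 < t \<and> t < 1")
      case True
      define \<delta> where "\<delta> = min t (1 - t)"
      have \<delta>: "0 < \<delta>" using True by (simp add: \<delta>_def)
      obtain n where n: "1 / \<delta> < real n" using reals_Archimedean2 by blast
      then have "1 < real n * \<delta> + 3 * \<delta>" using \<delta> by (simp add: field_simps)
      then have "1 / (real n + 3) \<le> \<delta>" by (simp add: field_simps)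
      then have "t \<in> I n" by (auto simp: I_def \<delta>_def)
      then show ?thesis using H[rule_format, of n] True by (simp add: mult.commute)
    qed simp
  qed
  then have "(\<integral>\<^sup>+ t. ennreal (indicator {0<..<1} t * f t) \<partial>lborel) = 0"
    by (subst nn_integral_0_iff_AE) auto
  with pos show False by simp
qed

text \<open>The left end of the support of a measure on \<open>(0, \<infinity>)\<close>.\<close>
lemma emeasure_Ioc_threshold:
  fixes \<nu> :: "real measure"
  assumes sets: "sets \<nu> = sets borel" and pos: "emeasure \<nu> {0<..} \<noteq> 0"
    and y: "0 < y" "emeasure \<nu> {0<..y} = 0"
  obtains c where "0 < c"
    "\<And>b. 0 < b \<Longrightarrow> b < c \<Longrightarrow> emeasure \<nu> {0<..b} = 0"
    "\<And>d. c < d \<Longrightarrow> emeasure \<nu> {0<..d} \<noteq> 0"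
proof -
  define p where "p c = emeasure \<nu> {0<..c}" for c
  have mono: "c \<le> c' \<Longrightarrow> p c \<le> p c'" for c c'
    unfolding p_def by (rule emeasure_mono) (auto simp: sets)
  obtain n :: nat where n: "p n \<noteq> 0"
  proof (rule ccontr)
    assume "\<not> thesis"
    then have "emeasure \<nu> (\<Union>n. {0<..real n}) = 0"
      using that by (intro emeasure_UN_eq_0) (auto simp: sets p_def)
    moreover have "(\<Union>n. {0<..real n}) = {0<..}" by (auto intro: real_arch_simple)
    ultimately show False using pos by simp
  qed
  define S where "S = {c. 0 < c \<and> p c = 0}"
  have "y \<in> S" using y by (simp add: S_def p_def)
  have "c < real n" if "c \<in> S" for c
    using mono[of n c] that n by (force simp: S_def)
  then have bdd: "bdd_above S" by (meson bdd_above.I less_imp_le)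
  show thesis
  proof
    show "0 < Sup S" using cSup_upper[OF \<open>y \<in> S\<close> bdd] y by simp
    show "emeasure \<nu> {0<..b} = 0" if "0 < b" "b < Sup S" for b
    proof -
      obtain s where "s \<in> S" "b < s" using \<open>b < Sup S\<close> \<open>y \<in> S\<close> bdd
        by (subst (asm) less_cSup_iff) auto
      then show ?thesis using mono[of b s] by (simp add: S_def p_def)
    qed
    show "emeasure \<nu> {0<..d} \<noteq> 0" if "Sup S < d" for d
      using cSup_upper[OF _ bdd, of d] cSup_upper[OF \<open>y \<in> S\<close> bdd] that y
      by (auto simp: S_def p_def)
  qed
qed

lemma nn_integral_pos_mult:
  fixes f w :: "'a \<Rightarrow> real"
  assumes pos: "0 < (\<integral>\<^sup>+x. ennreal (f x * indicator A x) \<partial>M)" and w: "\<And>x. x \<in> A \<Longrightarrow> 0 < w x"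
    and [measurable]: "f \<in> borel_measurable M" "w \<in> borel_measurable M" "A \<in> sets M"
  shows "0 < (\<integral>\<^sup>+x. ennreal (f x * w x * indicator A x) \<partial>M)"
proof (rule ccontr)
  assume "\<not> ?thesis"
  then have "AE x in M. ennreal (f x * w x * indicator A x) = 0"
    by (simp add: zero_less_iff_neq_zero nn_integral_0_iff_AE)
  then have "AE x in M. ennreal (f x * indicator A x) = 0"
    by (rule eventually_mono)
      (use w in \<open>force simp: indicator_def ennreal_eq_0_iff mult_le_0_iff split: if_splits\<close>)
  then have "(\<integral>\<^sup>+x. ennreal (f x * indicator A x) \<partial>M) = 0"
    by (simp add: nn_integral_0_iff_AE)
  with pos show False by simp
qed

lemma nn_integral_lborel_uminus:
  fixes f :: "real \<Rightarrow> ennreal"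
  assumes "f \<in> borel_measurable borel"
  shows "(\<integral>\<^sup>+x. f x \<partial>lborel) = (\<integral>\<^sup>+x. f (- x) \<partial>lborel)"
  using assms by (subst lborel_distr_uminus[symmetric]) (simp add: nn_integral_distr)

lemma powr_inverse_powr:
  fixes a s :: real
  assumes "0 < a" "0 \<le> s"
  shows "(s powr (1 / a)) powr a = s"
  using assms by (cases "s = 0") (auto simp: powr_powr)

text \<open>If \<open>|D|\<close> is dominated by its own average along a random contraction \<open>u \<mapsto> u r\<close>, then
  at a maximiser of \<open>|D|\<close> on \<open>[-S, S]\<close> of least modulus the average is strictly smaller.\<close>
lemma zero_if_norm_le_integral_contraction:
  fixes D :: "real \<Rightarrow> 'b::real_normed_vector" and T :: "'c measure"
  assumes T: "prob_space T" and cont: "continuous_on UNIV D" and D0: "D 0 = 0"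
    and r[measurable]: "r \<in> borel_measurable T" and contr: "AE t in T. \<bar>r t\<bar> < 1"
    and le: "\<And>u. norm (D u) \<le> (\<integral>t. norm (D (u * r t)) \<partial>T)"
  shows "D u = 0"
proof -
  interpret T: prob_space T by (rule T)
  have [measurable]: "D \<in> borel_measurable borel"
    using cont by (rule borel_measurable_continuous_onI)
  define C where "C = {-\<bar>u\<bar>..\<bar>u\<bar>}"
  have C: "compact C" "C \<noteq> {}" by (auto simp: C_def)
  obtain x0 where x0: "x0 \<in> C" "\<And>y. y \<in> C \<Longrightarrow> norm (D y) \<le> norm (D x0)"
    using continuous_attains_sup[OF C continuous_on_norm] continuous_on_subset[OF cont] by blast
  define M0 where "M0 = norm (D x0)"
  define Z where "Z = C \<inter> {s. norm (D s) = M0}"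
  have "closed {s. norm (D s) = M0}"
    by (rule closed_Collect_eq) (auto intro!: continuous_on_norm cont)
  then have "compact Z" unfolding Z_def using C by (intro compact_Int_closed) auto
  moreover have "Z \<noteq> {}" using x0 by (auto simp: Z_def M0_def)
  ultimately obtain s0 where s0: "s0 \<in> Z" "\<And>y. y \<in> Z \<Longrightarrow> \<bar>s0\<bar> \<le> \<bar>y\<bar>"
    using continuous_attains_inf[of Z "\<lambda>y. \<bar>y\<bar>"] continuous_on_rabs[OF continuous_on_id]
    by blast
  have "M0 = 0"
  proof (rule ccontr)
    assume "M0 \<noteq> 0"
    then have "s0 \<noteq> 0" using s0(1) D0 by (auto simp: Z_def)
    have lt: "norm (D (s0 * c)) < M0" if c: "\<bar>c\<bar> < 1" for c
    proof -
      have "\<bar>s0 * c\<bar> < \<bar>s0\<bar>" using c \<open>s0 \<noteq> 0\<close> by (simp add: abs_mult)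
      then have "s0 * c \<in> C" "s0 * c \<notin> Z"
        using s0 unfolding Z_def C_def by fastforce+
      then show ?thesis using x0(2)[of "s0 * c"] by (auto simp: Z_def M0_def)
    qed
    have "M0 = norm (D s0)" using s0(1) by (simp add: Z_def)
    also have "\<dots> \<le> (\<integral>t. norm (D (s0 * r t)) \<partial>T)" by (rule le)
    also have "\<dots> < (\<integral>t. M0 \<partial>T)"
    proof (rule T.integral_less_AE_space)
      have "AE t in T. norm (norm (D (s0 * r t))) \<le> M0"
        using contr by (rule eventually_mono) (simp add: lt less_imp_le)
      then show "integrable T (\<lambda>t. norm (D (s0 * r t)))"
        by (rule T.integrable_const_bound) simp
      show "AE t in T. norm (D (s0 * r t)) < M0"
        using contr by (rule eventually_mono) (rule lt)
    qed (auto simp: T.emeasure_space_1)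
    also have "\<dots> = M0" by (simp add: T.prob_space)
    finally show False by simp
  qed
  moreover have "u \<in> C" by (auto simp: C_def)
  ultimately show ?thesis using x0(2) by (simp add: M0_def)
qed

lemma prob_space_Exp1: "prob_space Exp1"
  unfolding Exp1_def using prob_space_exponential_density[of 1] by simp

lemma sets_Exp1[simp, measurable_cong]: "sets Exp1 = sets borel"
  unfolding Exp1_def by simp

lemma space_Exp1[simp]: "space Exp1 = UNIV"
  unfolding Exp1_def by simp

lemma real_distribution_Exp1: "real_distribution Exp1"
  unfolding real_distribution_def real_distribution_axioms_def using prob_space_Exp1 by simp

lemma AE_Exp1_pos: "AE e in Exp1. 0 < e"
proof -
  have "AE e in lborel. e \<noteq> 0" by (rule AE_lborel_singleton)
  then show ?thesis unfolding Exp1_def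
    by (subst AE_density) (auto elim!: eventually_mono simp: exponential_density_def)
qed

lemma emeasure_Exp1_pos: "0 < b \<Longrightarrow> 0 < emeasure Exp1 {0<..b}"
  unfolding Exp1_def by (intro emeasure_density_pos) (auto simp: exponential_density_def)

lemma step_map_eq: "step_map a = (\<lambda>p. fst (snd p) * (snd (snd p) + fst p powr a) powr (1 / a))"
  by (auto simp: step_map_def fun_eq_iff)

lemma measurable_step_map[measurable]:
  fixes M1 M2 M3 :: "real measure"
  assumes "sets M1 = sets borel" "sets M2 = sets borel" "sets M3 = sets borel"
  shows "step_map a \<in> borel_measurable (M1 \<Otimes>\<^sub>M (M2 \<Otimes>\<^sub>M M3))"
  unfolding step_map_eq using assms by measurable

lemma Xterm_cong:
  assumes "\<And>n. 1 \<le> n \<Longrightarrow> e1 n x = e2 n y" "\<And>n. 1 \<le> n \<Longrightarrow> t1 n x = t2 n y"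
  shows "Xterm a e1 t1 x = Xterm a e2 t2 y"
  unfolding Xterm_def fun_eq_iff using assms by (auto intro!: prod.cong)

lemma Xinf_cong:
  assumes "\<And>n. 1 \<le> n \<Longrightarrow> e1 n x = e2 n y" "\<And>n. 1 \<le> n \<Longrightarrow> t1 n x = t2 n y"
  shows "Xinf a e1 t1 x = Xinf a e2 t2 y"
  unfolding Xinf_def using Xterm_cong[of e1 x e2 y t1 t2 a, OF assms] by simp

lemma Xterm_0: "Xterm a e t x 0 = e 1 x * t 1 x powr a"
  unfolding Xterm_def by simp

lemma Xterm_Suc:
  "Xterm a e t x (Suc k) = t 1 x powr a * Xterm a (\<lambda>n. e (Suc n)) (\<lambda>n. t (Suc n)) x k"
  unfolding Xterm_def
  by (simp add: prod.shift_bounds_cl_Suc_ivl prod.atLeast0_atMost_Suc_shift comp_def mult_ac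
      del: prod.cl_ivl_Suc)

locale perpetuity = prob_space M for M :: "'a measure" +
  fixes \<alpha> :: real and h :: "real \<Rightarrow> real" and eps theta :: "nat \<Rightarrow> 'a \<Rightarrow> real"
  assumes alpha: "\<alpha> > 0"
    and h_meas[measurable]: "h \<in> borel_measurable borel"
    and h_nonneg: "\<And>r. 0 < r \<Longrightarrow> r < 1 \<Longrightarrow> h r \<ge> 0"
    and h_norm: "(\<integral>\<^sup>+ r. ennreal (indicator {0<..<1} r * h r * r) \<partial>lborel) = 1"
    and indep: "indep_vars (\<lambda>_. borel)
                  (\<lambda>i. case i of Inl n \<Rightarrow> eps n | Inr n \<Rightarrow> theta n)
                  (Inl ` {1..} \<union> Inr ` {1..})"
    and eps_exp: "\<And>n. n \<ge> 1 \<Longrightarrow>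
                    distributed M lborel (eps n) (\<lambda>x. ennreal (exponential_density 1 x))"
    and theta_range: "\<And>n. n \<ge> 1 \<Longrightarrow> AE x in M. 0 < theta n x \<and> theta n x < 1"
    and theta_cdf: "\<And>n r. n \<ge> 1 \<Longrightarrow> 0 < r \<Longrightarrow> r < 1 \<Longrightarrow>
                    ennreal (measure M {x \<in> space M. theta n x \<le> r})
                      = (\<integral>\<^sup>+ z. ennreal (indicator {0<..r} z * h z * z) \<partial>lborel)"
begin

definition var :: "nat + nat \<Rightarrow> 'a \<Rightarrow> real" where
  "var i = (case i of Inl n \<Rightarrow> eps n | Inr n \<Rightarrow> theta n)"

definition idx :: "(nat + nat) set" where
  "idx = Inl ` {1..} \<union> Inr ` {1..}"

definition Theta :: "real measure" where
  "Theta = density lborel (\<lambda>t. ennreal (indicator {0<..<1} t * h t * t))"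

lemma indep_vars_var: "indep_vars (\<lambda>_. borel) var idx"
  using indep unfolding var_def idx_def by simp

lemma measurable_var[measurable]: "i \<in> idx \<Longrightarrow> var i \<in> borel_measurable M"
  using indep_vars_var unfolding indep_vars_def by auto

lemma measurable_eps[measurable]: "1 \<le> n \<Longrightarrow> eps n \<in> borel_measurable M"
  using measurable_var[of "Inl n"] by (simp add: var_def idx_def)

lemma measurable_theta[measurable]: "1 \<le> n \<Longrightarrow> theta n \<in> borel_measurable M"
  using measurable_var[of "Inr n"] by (simp add: var_def idx_def)

lemma distr_eps: "1 \<le> n \<Longrightarrow> distr M borel (eps n) = Exp1"
  using distributed_distr_eq_density[OF eps_exp, of n] distr_cong[of M M borel lborel "eps n"]
  by (simp add: Exp1_def)

lemma AE_eps_pos: assumes n: "1 \<le> n" shows "AE x in M. 0 < eps n x"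
proof -
  have "AE e in distr M borel (eps n). 0 < e" unfolding distr_eps[OF n] by (rule AE_Exp1_pos)
  then show ?thesis using n by (subst (asm) AE_distr_iff) auto
qed

lemma prob_space_Theta: "prob_space Theta"
  unfolding Theta_def
  by (rule prob_spaceI) (simp add: emeasure_density h_norm[unfolded mult.assoc] mult.assoc)

lemma sets_Theta[simp, measurable_cong]: "sets Theta = sets borel"
  by (simp add: Theta_def)

lemma AE_Theta: "AE t in Theta. 0 < t \<and> t < 1"
  unfolding Theta_def by (subst AE_density) (auto simp: indicator_def)

lemma emeasure_Theta_atMost:
  "emeasure Theta {..x} = (if x \<le> 0 then 0 else if x < 1
     then \<integral>\<^sup>+ z. ennreal (indicator {0<..x} z * h z * z) \<partial>lborel else 1)"
proof -
  have "emeasure Theta {..x} =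
      (\<integral>\<^sup>+ t. ennreal (indicator {0<..<1} t * h t * t * indicator {..x} t) \<partial>lborel)"
    unfolding Theta_def
    by (subst emeasure_density) (auto intro!: nn_integral_cong simp: indicator_def ennreal_mult'')
  also have "\<dots> = (if x \<le> 0 then 0 else if x < 1
     then \<integral>\<^sup>+ z. ennreal (indicator {0<..x} z * h z * z) \<partial>lborel else 1)"
  proof (cases "x \<le> 0")
    case True
    then show ?thesis by (subst nn_integral_cong[where v="\<lambda>_. 0"]) (auto simp: indicator_def)
  qed (auto simp: h_norm[symmetric] indicator_def intro!: nn_integral_cong)
  finally show ?thesis .
qed

lemma emeasure_theta_le:
  assumes n: "1 \<le> n"
  shows "emeasure M {\<omega> \<in> space M. theta n \<omega> \<le> x} = (if x \<le> 0 then 0 else if x < 1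
     then \<integral>\<^sup>+ z. ennreal (indicator {0<..x} z * h z * z) \<partial>lborel else 1)"
proof -
  have range: "AE \<omega> in M. 0 < theta n \<omega> \<and> theta n \<omega> < 1" by (rule theta_range[OF n])
  consider "x \<le> 0" | "0 < x" "x < 1" | "1 \<le> x" by linarith
  then show ?thesis
  proof cases
    case 1
    have "AE \<omega> in M. \<not> theta n \<omega> \<le> x" using range by eventually_elim (use 1 in auto)
    then show ?thesis using 1 n by (subst (asm) AE_iff_measurable) auto
  next
    case 2
    then show ?thesis using theta_cdf[OF n 2] by (simp add: emeasure_eq_measure)
  next
    case 3
    have "AE \<omega> in M. theta n \<omega> \<le> x" using range by eventually_elim (use 3 in auto)
    then show ?thesis using 3 n by (subst emeasure_eq_1_AE) auto
  qed
qed

lemma distr_theta: assumes n: "1 \<le> n" shows "distr M borel (theta n) = Theta"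
proof (rule cdf_unique)
  show "real_distribution (distr M borel (theta n))"
    using n by (intro real_distribution_distr) auto
  show "real_distribution Theta"
    unfolding real_distribution_def real_distribution_axioms_def using prob_space_Theta by simp
  have "emeasure (distr M borel (theta n)) {..x} = emeasure Theta {..x}" for x
    using n by (subst emeasure_distr)
      (auto simp: emeasure_Theta_atMost emeasure_theta_le[symmetric] intro!: arg_cong[where f="emeasure M"])
  then show "cdf (distr M borel (theta n)) = cdf Theta"
    by (auto simp: cdf_def measure_def)
qed

section \<open>Moments and almost sure convergence\<close>

abbreviation XT :: "'a \<Rightarrow> nat \<Rightarrow> real" where "XT \<equiv> Xterm \<alpha> eps theta"

definition moment :: real where "moment = (\<integral>\<omega>. theta 1 \<omega> powr \<alpha> \<partial>M)"

definition series :: "'a \<Rightarrow> real" where "series \<omega> = (\<Sum>k. XT \<omega> k)"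

lemma
  assumes n: "1 \<le> n"
  shows integrable_theta_powr: "integrable M (\<lambda>\<omega>. theta n \<omega> powr \<alpha>)"
    and integral_theta_powr: "(\<integral>\<omega>. theta n \<omega> powr \<alpha> \<partial>M) = moment"
proof -
  have "AE \<omega> in M. norm (theta n \<omega> powr \<alpha>) \<le> 1"
    using theta_range[OF n] by eventually_elim (use alpha in \<open>auto intro!: powr_le1\<close>)
  then show "integrable M (\<lambda>\<omega>. theta n \<omega> powr \<alpha>)"
    using n by (intro integrable_const_bound) auto
  have "(\<integral>\<omega>. theta n \<omega> powr \<alpha> \<partial>M) = (\<integral>t. t powr \<alpha> \<partial>distr M borel (theta n))"
    using n by (subst integral_distr) auto
  also have "\<dots> = (\<integral>t. t powr \<alpha> \<partial>distr M borel (theta 1))"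
    using distr_theta[OF n] distr_theta[of 1] by simp
  also have "\<dots> = moment" unfolding moment_def by (subst integral_distr) auto
  finally show "(\<integral>\<omega>. theta n \<omega> powr \<alpha> \<partial>M) = moment" .
qed

lemma moment_nonneg: "0 \<le> moment"
  unfolding moment_def by (rule integral_nonneg_AE) auto

lemma moment_less_1: "moment < 1"
proof -
  have "(\<integral>\<omega>. theta 1 \<omega> powr \<alpha> \<partial>M) < (\<integral>\<omega>. 1 \<partial>M)"
  proof (rule integral_less_AE_space)
    show "AE \<omega> in M. theta 1 \<omega> powr \<alpha> < 1"
      using theta_range[OF order_refl] by eventually_elim (use alpha in \<open>auto simp: powr01_less_one\<close>)
  qed (auto simp: emeasure_space_1 integrable_theta_powr)
  then show ?thesis unfolding moment_def by (simp add: prob_space)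
qed

lemma nn_integral_eps: assumes n: "1 \<le> n" shows "(\<integral>\<^sup>+\<omega>. ennreal (eps n \<omega>) \<partial>M) = 1"
proof -
  have "has_bochner_integral M (\<lambda>x. eps n x ^ 1) (fact (0 + 1) / (fact 0 * 1 ^ 1))"
    by (rule has_bochner_integral_erlang_ith_moment[of 1]) (use eps_exp[OF n] in auto)
  then have "integrable M (eps n)" "(\<integral>x. eps n x \<partial>M) = 1"
    by (auto simp: has_bochner_integral_iff)
  then show ?thesis using AE_eps_pos[OF n]
    by (subst nn_integral_eq_integral) (auto elim!: eventually_mono)
qed

lemma AE_eps_Suc_pos: "AE \<omega> in M. 0 < eps (Suc k) \<omega>"
  by (rule AE_eps_pos) simp

definition term_factor :: "nat + nat \<Rightarrow> 'a \<Rightarrow> real" where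
  "term_factor i \<omega> = (case i of Inl n \<Rightarrow> max 0 (eps n \<omega>) | Inr n \<Rightarrow> theta n \<omega> powr \<alpha>)"

lemma indep_vars_term_factor: "indep_vars (\<lambda>_. borel) term_factor idx"
proof -
  have "indep_vars (\<lambda>_. borel)
      (\<lambda>i x. (case i of Inl n \<Rightarrow> max 0 | Inr n \<Rightarrow> (\<lambda>y. y powr \<alpha>)) (var i x)) idx"
    by (rule indep_vars_compose2[OF indep_vars_var]) (auto split: sum.split)
  then show ?thesis
    by (rule indep_vars_cong[THEN iffD1, rotated 3])
      (auto simp: term_factor_def var_def fun_eq_iff split: sum.split)
qed

lemma nn_integral_Xterm: "(\<integral>\<^sup>+\<omega>. ennreal (XT \<omega> k) \<partial>M) = ennreal (moment ^ Suc k)"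
proof -
  define J where "J = insert (Inl (Suc k)) (Inr ` {1..Suc k})"
  have J: "finite J" "J \<subseteq> idx" by (auto simp: J_def idx_def)
  have prod_J: "(\<Prod>i\<in>J. f i) = f (Inl (Suc k)) * (\<Prod>j\<in>{1..Suc k}. f (Inr j))"
    for f :: "nat + nat \<Rightarrow> 'b::comm_monoid_mult"
    unfolding J_def by (subst prod.insert) (auto simp: prod.reindex)
  have "AE \<omega> in M. XT \<omega> k = (\<Prod>i\<in>J. term_factor i \<omega>)"
    using AE_eps_Suc_pos[of k] by eventually_elim (auto simp: prod_J term_factor_def Xterm_def)
  then have "(\<integral>\<^sup>+\<omega>. ennreal (XT \<omega> k) \<partial>M) = (\<integral>\<^sup>+\<omega>. (\<Prod>i\<in>J. ennreal (term_factor i \<omega>)) \<partial>M)"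
    by (intro nn_integral_cong_AE)
      (auto simp: term_factor_def prod_ennreal prod_nonneg split: sum.split elim!: eventually_mono)
  also have "\<dots> = (\<Prod>i\<in>J. \<integral>\<^sup>+\<omega>. ennreal (term_factor i \<omega>) \<partial>M)"
    by (rule indep_vars_nn_integral[OF J(1)
          indep_vars_compose2[OF indep_vars_subset[OF indep_vars_term_factor J(2)]]]) auto
  also have "\<dots> = (\<Prod>j\<in>{1..Suc k}. ennreal moment)"
    using nn_integral_eps[of "Suc k"] integrable_theta_powr integral_theta_powr
    by (simp add: prod_J term_factor_def ennreal_max_0 nn_integral_eq_integral)
  also have "\<dots> = ennreal (moment ^ Suc k)"
    by (simp only: prod_constant card_atLeastAtMost diff_Suc_1 ennreal_power[OF moment_nonneg])
  finally show ?thesis .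
qed

lemma measurable_Xterm[measurable]: "(\<lambda>\<omega>. XT \<omega> k) \<in> borel_measurable M"
  unfolding Xterm_def by measurable

lemma measurable_Xinf[measurable]: "Xinf \<alpha> eps theta \<in> borel_measurable M"
  unfolding Xinf_def by measurable

lemma AE_Xterm_nonneg: "AE \<omega> in M. \<forall>k. 0 \<le> XT \<omega> k"
  unfolding AE_all_countable
proof
  fix k show "AE \<omega> in M. 0 \<le> XT \<omega> k"
    using AE_eps_Suc_pos[of k]
    by eventually_elim
      (auto simp: Xterm_def simp del: prod.cl_ivl_Suc intro!: prod_nonneg mult_nonneg_nonneg)
qed

lemma nn_integral_series:
  "(\<integral>\<^sup>+\<omega>. (\<Sum>k. ennreal (XT \<omega> k)) \<partial>M) = ennreal (moment / (1 - moment))"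
proof -
  have geometric: "(\<lambda>k. moment ^ Suc k) sums (moment / (1 - moment))"
    using sums_mult[OF geometric_sums, of moment moment] moment_nonneg moment_less_1 by simp
  have "(\<integral>\<^sup>+\<omega>. (\<Sum>k. ennreal (XT \<omega> k)) \<partial>M) = (\<Sum>k. \<integral>\<^sup>+\<omega>. ennreal (XT \<omega> k) \<partial>M)"
    by (rule nn_integral_suminf) auto
  also have "\<dots> = ennreal (moment / (1 - moment))"
    unfolding nn_integral_Xterm by (rule suminf_ennreal_eq[OF _ geometric]) (simp add: moment_nonneg)
  finally show ?thesis .
qed

lemma AE_summable_Xterm: "AE \<omega> in M. summable (XT \<omega>)"
proof -
  have "AE \<omega> in M. (\<Sum>k. ennreal (XT \<omega> k)) \<noteq> \<infinity>"
    by (rule nn_integral_PInf_AE) (auto simp: nn_integral_series)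
  then show ?thesis using AE_Xterm_nonneg
    by eventually_elim (auto intro: summable_suminf_not_top)
qed

lemma AE_series_nonneg: "AE \<omega> in M. 0 \<le> series \<omega>"
  using AE_summable_Xterm AE_Xterm_nonneg
  by eventually_elim (simp add: series_def suminf_nonneg)

lemma AE_Xinf_powr: "AE \<omega> in M. Xinf \<alpha> eps theta \<omega> powr \<alpha> = series \<omega>"
  using AE_series_nonneg
  by eventually_elim (simp add: Xinf_def series_def[symmetric] powr_inverse_powr alpha)

lemma nn_integral_Xinf_powr:
  "(\<integral>\<^sup>+\<omega>. ennreal (Xinf \<alpha> eps theta \<omega> powr \<alpha>) \<partial>M) = ennreal (moment / (1 - moment))"
proof -
  have "AE \<omega> in M. ennreal (Xinf \<alpha> eps theta \<omega> powr \<alpha>) = (\<Sum>k. ennreal (XT \<omega> k))"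
    using AE_Xinf_powr AE_summable_Xterm AE_Xterm_nonneg
    by eventually_elim (simp add: series_def suminf_ennreal2)
  then show ?thesis by (simp add: nn_integral_cong_AE nn_integral_series)
qed

lemma integrable_Xinf_powr: "integrable M (\<lambda>\<omega>. Xinf \<alpha> eps theta \<omega> powr \<alpha>)"
  by (rule integrableI_nn_integral_finite[OF _ _ nn_integral_Xinf_powr]) auto

lemma integral_Xinf_powr: "(\<integral>\<omega>. Xinf \<alpha> eps theta \<omega> powr \<alpha> \<partial>M) = moment / (1 - moment)"
  using moment_nonneg moment_less_1
  by (subst integral_eq_nn_integral) (auto simp: nn_integral_Xinf_powr)

lemma AE_Xinf_pos: "AE \<omega> in M. 0 < Xinf \<alpha> eps theta \<omega>"
  using theta_range[OF order_refl] AE_eps_pos[OF order_refl] AE_summable_Xterm AE_Xterm_nonneg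
proof eventually_elim
  case (elim \<omega>)
  then have "0 < XT \<omega> 0" by (simp add: Xterm_0)
  then have "0 < series \<omega>" unfolding series_def using elim by (intro suminf_pos2[of _ 0]) auto
  then show ?case by (simp add: Xinf_def series_def)
qed

section \<open>Stationarity of the law of \<open>X\<^sub>\<infinity>\<close>\<close>

abbreviation Xshift :: "'a \<Rightarrow> real" where
  "Xshift \<equiv> Xinf \<alpha> (\<lambda>n. eps (Suc n)) (\<lambda>n. theta (Suc n))"

lemma AE_Xinf_eq_step_map:
  "AE \<omega> in M. Xinf \<alpha> eps theta \<omega> = step_map \<alpha> (Xshift \<omega>, theta 1 \<omega>, eps 1 \<omega>)"
  using theta_range[OF order_refl] AE_eps_pos[OF order_refl] AE_summable_Xterm AE_Xterm_nonneg
proof eventually_elim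
  case (elim \<omega>)
  define c where "c = theta 1 \<omega> powr \<alpha>"
  have c: "0 < c" using elim by (simp add: c_def)
  define f where "f = Xterm \<alpha> (\<lambda>n. eps (Suc n)) (\<lambda>n. theta (Suc n)) \<omega>"
  have XT_Suc: "XT \<omega> (Suc k) = c * f k" for k unfolding c_def f_def by (rule Xterm_Suc)
  have "summable (\<lambda>k. c * f k)"
    using elim(3) unfolding XT_Suc[symmetric] by (subst summable_Suc_iff)
  then have f: "summable f" using c by (simp add: summable_cmult_iff)
  have "0 \<le> f k" for k
    using spec[OF elim(4), of "Suc k"] XT_Suc[of k] c by (simp add: zero_le_mult_iff)
  then have f_nonneg: "0 \<le> suminf f" using f by (simp add: suminf_nonneg)
  have "series \<omega> = XT \<omega> 0 + (\<Sum>k. XT \<omega> (Suc k))"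
    unfolding series_def using suminf_split_head[OF elim(3)] by simp
  also have "\<dots> = c * (eps 1 \<omega> + suminf f)"
    using f by (simp add: XT_Suc Xterm_0 suminf_mult distrib_left) (simp add: c_def mult.commute)
  finally have series_eq: "series \<omega> = c * (eps 1 \<omega> + suminf f)" .
  have "Xinf \<alpha> eps theta \<omega> = c powr (1 / \<alpha>) * (eps 1 \<omega> + suminf f) powr (1 / \<alpha>)"
    unfolding Xinf_def series_def[symmetric] series_eq using c f_nonneg elim by (subst powr_mult) auto
  also have "c powr (1 / \<alpha>) = theta 1 \<omega>"
    unfolding c_def using elim alpha by (simp add: powr_powr)
  also have "suminf f = Xshift \<omega> powr \<alpha>"
    unfolding Xinf_def f_def[symmetric] using f_nonneg by (simp add: powr_inverse_powr alpha)
  finally show ?case by (simp add: step_map_def)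
qed

text \<open>The sequences are coordinates of a point in \<open>\<real>\<^bsup>idx\<^esup>\<close>, with \<open>\<epsilon>\<^sub>n\<close> at \<open>Inl n\<close> and
  \<open>\<theta>\<^sub>n\<close> at \<open>Inr n\<close>; the shift by one is then a measure preserving map of the product law.\<close>
definition shift :: "nat + nat \<Rightarrow> nat + nat" where "shift = map_sum Suc Suc"

definition sample :: "'a \<Rightarrow> nat + nat \<Rightarrow> real" where "sample \<omega> = (\<lambda>i\<in>idx. var i \<omega>)"

definition law :: "nat + nat \<Rightarrow> real measure" where
  "law i = (case i of Inl _ \<Rightarrow> Exp1 | Inr _ \<Rightarrow> Theta)"

definition Xinf_coords :: "(nat + nat \<Rightarrow> real) \<Rightarrow> real" where
  "Xinf_coords z = Xinf \<alpha> (\<lambda>n z. z (Inl n)) (\<lambda>n z. z (Inr n)) z"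

definition shift_coords :: "(nat + nat \<Rightarrow> real) \<Rightarrow> nat + nat \<Rightarrow> real" where
  "shift_coords z = (\<lambda>i\<in>idx. z (shift i))"

abbreviation coords :: "(nat + nat \<Rightarrow> real) measure" where
  "coords \<equiv> PiM idx (\<lambda>_. borel)"

lemma shift_in_idx: "i \<in> idx \<Longrightarrow> shift i \<in> idx"
  by (auto simp: idx_def shift_def)

lemma sets_law[simp, measurable_cong]: "sets (law i) = sets borel"
  by (cases i) (auto simp: law_def)

lemma sets_PiM_law: "sets (PiM idx law) = sets coords"
  by (rule sets_PiM_cong) auto

lemma measurable_sample[measurable]: "sample \<in> measurable M coords"
  unfolding sample_def by (intro measurable_restrict) auto

lemma distr_sample: "distr M (PiM idx law) sample = PiM idx law"
proof -
  have "idx \<noteq> {}" by (auto simp: idx_def)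
  then have "distr M coords sample = PiM idx (\<lambda>i. distr M borel (var i))"
    using indep_vars_iff_distr_eq_PiM'[where I=idx and M'="\<lambda>_. borel" and X=var] indep_vars_var
    unfolding sample_def by auto
  also have "\<dots> = PiM idx law"
    by (rule PiM_cong) (auto simp: idx_def var_def law_def distr_eps distr_theta)
  finally show ?thesis
    by (subst distr_cong[OF refl sets_PiM_law[symmetric], of _ _ sample, symmetric]) auto
qed

lemma measurable_Xinf_coords[measurable]: "Xinf_coords \<in> borel_measurable coords"
proof -
  have [measurable]: "(\<lambda>z. z (Inl n)) \<in> borel_measurable coords"
    "(\<lambda>z. z (Inr n)) \<in> borel_measurable coords" if "1 \<le> n" for n
    using that by (auto intro!: measurable_component_singleton simp: idx_def)
  have "(\<lambda>z. Xterm \<alpha> (\<lambda>n z. z (Inl n)) (\<lambda>n z. z (Inr n)) z k) \<in> borel_measurable coords" for k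
    unfolding Xterm_def by measurable
  then show ?thesis unfolding Xinf_coords_def Xinf_def by measurable
qed

lemma measurable_shift_coords[measurable]: "shift_coords \<in> measurable coords coords"
  unfolding shift_coords_def
  by (intro measurable_restrict measurable_component_singleton) (auto simp: shift_in_idx)

lemma Xinf_eq_Xinf_coords: "Xinf \<alpha> eps theta \<omega> = Xinf_coords (sample \<omega>)"
  unfolding Xinf_coords_def by (rule Xinf_cong) (auto simp: sample_def idx_def var_def)

lemma Xshift_eq_Xinf_coords: "Xshift \<omega> = Xinf_coords (shift_coords (sample \<omega>))"
  unfolding Xinf_coords_def
  by (rule Xinf_cong) (auto simp: shift_coords_def sample_def idx_def var_def shift_def)

lemma measurable_Xshift[measurable]: "Xshift \<in> borel_measurable M"
  unfolding Xshift_eq_Xinf_coords by measurable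

lemma distr_shift_coords: "distr (PiM idx law) (PiM idx law) shift_coords = PiM idx law"
proof -
  have "law (shift i) = law i" for i by (cases i) (auto simp: law_def shift_def)
  moreover have "prob_space (law i)" for i
    by (cases i) (auto simp: law_def prob_space_Exp1 prob_space_Theta)
  ultimately have "distr (PiM idx law) (PiM idx (\<lambda>i. law (shift i))) (\<lambda>\<omega>. \<lambda>n\<in>idx. \<omega> (shift n))
      = PiM idx (\<lambda>i. law (shift i))"
    by (intro distr_PiM_reindex)
      (auto simp: inj_on_def shift_def idx_def map_sum_def split: sum.splits)
  then show ?thesis by (simp add: shift_coords_def[abs_def] \<open>\<And>i. law (shift i) = law i\<close>)
qed

lemma distr_Xshift: "distr M borel Xshift = distr M borel (Xinf \<alpha> eps theta)"
proof -
  have [measurable]: "sample \<in> measurable M (PiM idx law)"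
    "Xinf_coords \<in> borel_measurable (PiM idx law)"
    "shift_coords \<in> measurable (PiM idx law) (PiM idx law)"
    using measurable_cong_sets[OF _ sets_PiM_law] measurable_cong_sets[OF sets_PiM_law]
    by auto
  have "Xshift = Xinf_coords \<circ> shift_coords \<circ> sample"
    by (simp add: fun_eq_iff Xshift_eq_Xinf_coords)
  then have "distr M borel Xshift = distr (distr M (PiM idx law) sample) borel (Xinf_coords \<circ> shift_coords)"
    by (subst distr_distr) (auto simp: comp_assoc)
  also have "\<dots> = distr (distr (distr M (PiM idx law) sample) (PiM idx law) shift_coords) borel Xinf_coords"
    by (subst distr_distr) auto
  also have "\<dots> = distr M borel (Xinf_coords \<circ> sample)"
    unfolding distr_sample distr_shift_coords by (subst (1) distr_sample[symmetric], subst distr_distr) auto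
  finally show ?thesis by (simp add: comp_def Xinf_eq_Xinf_coords[abs_def])
qed

lemma distr_Xshift_theta_eps:
  "distr M (borel \<Otimes>\<^sub>M (borel \<Otimes>\<^sub>M borel)) (\<lambda>\<omega>. (Xshift \<omega>, theta 1 \<omega>, eps 1 \<omega>))
     = distr M borel Xshift \<Otimes>\<^sub>M distr M (borel \<Otimes>\<^sub>M borel) (\<lambda>\<omega>. (theta 1 \<omega>, eps 1 \<omega>))"
proof -
  define A where "A = shift ` idx"
  define B where "B = {Inr (1::nat), Inl (1::nat)}"
  let ?rA = "\<lambda>\<omega>. restrict (\<lambda>i. var i \<omega>) A" and ?PA = "PiM A (\<lambda>_. borel :: real measure)"
  let ?rB = "\<lambda>\<omega>. restrict (\<lambda>i. var i \<omega>) B" and ?PB = "PiM B (\<lambda>_. borel :: real measure)"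
  have indep_AB: "indep_var ?PA ?rA ?PB ?rB"
    by (rule indep_var_restrict[OF indep_vars_var]) (auto simp: A_def B_def idx_def shift_def)
  define X where "X z = Xinf_coords (\<lambda>i\<in>idx. z (shift i))" for z :: "nat + nat \<Rightarrow> real"
  define Y where "Y z = (z (Inr 1), z (Inl 1))" for z :: "nat + nat \<Rightarrow> real"
  have "(\<lambda>z. \<lambda>i\<in>idx. z (shift i)) \<in> measurable ?PA coords"
    by (intro measurable_restrict measurable_component_singleton) (auto simp: A_def)
  then have [measurable]: "X \<in> borel_measurable ?PA" unfolding X_def by measurable
  have [measurable]: "Y \<in> measurable ?PB (borel \<Otimes>\<^sub>M borel)"
    unfolding Y_def by (intro measurable_Pair measurable_component_singleton) (auto simp: B_def)
  have [measurable]: "?rA \<in> measurable M ?PA" "?rB \<in> measurable M ?PB"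
    by (auto simp: A_def B_def idx_def shift_def intro!: measurable_restrict)
  have X: "X (?rA \<omega>) = Xshift \<omega>" for \<omega>
  proof -
    have "(\<lambda>i\<in>idx. ?rA \<omega> (shift i)) = shift_coords (sample \<omega>)"
      unfolding shift_coords_def sample_def by (intro restrict_ext) (auto simp: A_def shift_in_idx)
    then show ?thesis unfolding X_def Xshift_eq_Xinf_coords by simp
  qed
  have Y: "Y (?rB \<omega>) = (theta 1 \<omega>, eps 1 \<omega>)" for \<omega>
    by (auto simp: Y_def B_def var_def)
  interpret PB: prob_space "distr (distr M ?PB ?rB) (borel \<Otimes>\<^sub>M borel) Y"
    by (intro prob_space.prob_space_distr prob_space_distr) auto
  have "distr M (borel \<Otimes>\<^sub>M (borel \<Otimes>\<^sub>M borel)) (\<lambda>\<omega>. (Xshift \<omega>, theta 1 \<omega>, eps 1 \<omega>))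
     = distr (distr M (?PA \<Otimes>\<^sub>M ?PB) (\<lambda>\<omega>. (?rA \<omega>, ?rB \<omega>))) (borel \<Otimes>\<^sub>M (borel \<Otimes>\<^sub>M borel))
         (\<lambda>(x, y). (X x, Y y))"
    by (subst distr_distr) (auto simp: comp_def X Y)
  also have "distr M (?PA \<Otimes>\<^sub>M ?PB) (\<lambda>\<omega>. (?rA \<omega>, ?rB \<omega>)) = distr M ?PA ?rA \<Otimes>\<^sub>M distr M ?PB ?rB"
    using indep_AB[unfolded indep_var_distribution_eq] by simp
  also have "distr (distr M ?PA ?rA \<Otimes>\<^sub>M distr M ?PB ?rB) (borel \<Otimes>\<^sub>M (borel \<Otimes>\<^sub>M borel)) (\<lambda>(x, y). (X x, Y y))
     = distr (distr M ?PA ?rA) borel X \<Otimes>\<^sub>M distr (distr M ?PB ?rB) (borel \<Otimes>\<^sub>M borel) Y"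
    by (rule pair_measure_distr[symmetric]) (auto intro: PB.sigma_finite_measure)
  finally show ?thesis by (simp add: distr_distr comp_def X Y)
qed

lemma indep_theta_eps: "indep_var borel (theta 1) borel (eps 1)"
proof -
  have "indep_var (PiM {Inr 1} (\<lambda>_. borel)) (\<lambda>\<omega>. restrict (\<lambda>i. var i \<omega>) {Inr 1})
      (PiM {Inl 1} (\<lambda>_. borel)) (\<lambda>\<omega>. restrict (\<lambda>i. var i \<omega>) {Inl 1})"
    by (rule indep_var_restrict[OF indep_vars_var]) (auto simp: idx_def)
  then have "indep_var borel ((\<lambda>z. z (Inr 1)) \<circ> (\<lambda>\<omega>. restrict (\<lambda>i. var i \<omega>) {Inr 1}))
      borel ((\<lambda>z. z (Inl 1)) \<circ> (\<lambda>\<omega>. restrict (\<lambda>i. var i \<omega>) {Inl 1}))"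
    by (rule indep_var_compose) (auto intro!: measurable_component_singleton)
  then show ?thesis by (simp add: comp_def var_def)
qed

lemma distr_theta_eps: "distr M (borel \<Otimes>\<^sub>M borel) (\<lambda>\<omega>. (theta 1 \<omega>, eps 1 \<omega>)) = Theta \<Otimes>\<^sub>M Exp1"
  using indep_theta_eps[unfolded indep_var_distribution_eq] by (simp add: distr_theta distr_eps)

lemma distr_Xinf_step: "distr (distr M borel (Xinf \<alpha> eps theta) \<Otimes>\<^sub>M (Theta \<Otimes>\<^sub>M Exp1)) borel (step_map \<alpha>)
    = distr M borel (Xinf \<alpha> eps theta)"
proof -
  have "distr M borel (Xinf \<alpha> eps theta) = distr M borel (\<lambda>\<omega>. step_map \<alpha> (Xshift \<omega>, theta 1 \<omega>, eps 1 \<omega>))"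
    by (rule distr_cong_AE[OF refl refl AE_Xinf_eq_step_map]) auto
  also have "\<dots> = distr (distr M (borel \<Otimes>\<^sub>M (borel \<Otimes>\<^sub>M borel)) (\<lambda>\<omega>. (Xshift \<omega>, theta 1 \<omega>, eps 1 \<omega>)))
      borel (step_map \<alpha>)"
    by (subst distr_distr) (auto simp: comp_def)
  also have "distr M (borel \<Otimes>\<^sub>M (borel \<Otimes>\<^sub>M borel)) (\<lambda>\<omega>. (Xshift \<omega>, theta 1 \<omega>, eps 1 \<omega>))
      = distr M borel (Xinf \<alpha> eps theta) \<Otimes>\<^sub>M (Theta \<Otimes>\<^sub>M Exp1)"
    unfolding distr_Xshift_theta_eps distr_Xshift distr_theta_eps ..
  finally show ?thesis ..
qed

section \<open>Stationary laws charge every interval \<open>(0, y]\<close>\<close>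

lemma Theta_pos_subinterval:
  obtains a b where "0 < a" "a < b" "b < 1"
    "0 < (\<integral>\<^sup>+t. ennreal (h t * t * indicator {a..b} t) \<partial>lborel)"
proof -
  have "(\<integral>\<^sup>+ t. ennreal (indicator {0<..<1} t * (h t * t)) \<partial>lborel) \<noteq> 0"
    using h_norm by (simp add: mult.assoc)
  from nn_integral_pos_on_subinterval[OF _ this] show thesis using that by auto
qed

lemma emeasure_Theta_pos: "\<exists>b. 0 < b \<and> b < 1 \<and> 0 < emeasure Theta {0<..b}"
proof -
  obtain a b where ab: "0 < a" "a < b" "b < 1"
    and pos: "0 < (\<integral>\<^sup>+t. ennreal (h t * t * indicator {a..b} t) \<partial>lborel)"
    by (rule Theta_pos_subinterval)
  have "(\<integral>\<^sup>+t. ennreal (h t * t * indicator {a..b} t) \<partial>lborel) \<le> emeasure Theta {0<..b}"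
    unfolding Theta_def using ab
    by (subst emeasure_density)
      (auto intro!: nn_integral_mono simp: indicator_def ennreal_mult'' h_nonneg)
  then show ?thesis using ab pos by (intro exI[of _ b]) auto
qed

lemma emeasure_step_box:
  assumes st: "stationary_dist \<alpha> Theta \<nu>" and pos: "0 < d" "0 < a" "0 < b"
  shows "emeasure \<nu> {0<..d} * (emeasure Theta {0<..a} * emeasure Exp1 {0<..b})
     \<le> emeasure \<nu> {0<..a * (b + d powr \<alpha>) powr (1 / \<alpha>)}"
proof -
  let ?P = "\<nu> \<Otimes>\<^sub>M (Theta \<Otimes>\<^sub>M Exp1)" and ?c = "a * (b + d powr \<alpha>) powr (1 / \<alpha>)"
  have sets: "sets \<nu> = sets borel" and "prob_space \<nu>"
    and eq: "distr ?P borel (step_map \<alpha>) = \<nu>"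
    using st by (auto simp: stationary_dist_def)
  interpret TE: prob_space "Theta \<Otimes>\<^sub>M Exp1"
    by (intro prob_space_pair prob_space_Theta prob_space_Exp1)
  interpret E: prob_space Exp1 by (rule prob_space_Exp1)
  have [measurable]: "step_map \<alpha> \<in> borel_measurable ?P"
    using sets by (intro measurable_step_map) auto
  have "step_map \<alpha> (x, t, e) \<in> {0<..?c}" if "x \<in> {0<..d}" "t \<in> {0<..a}" "e \<in> {0<..b}" for x t e
  proof -
    have "0 < e + x powr \<alpha>" using that by (simp add: add_pos_nonneg)
    then have "0 < (e + x powr \<alpha>) powr (1 / \<alpha>)" by simp
    moreover have "(e + x powr \<alpha>) powr (1 / \<alpha>) \<le> (b + d powr \<alpha>) powr (1 / \<alpha>)"
      using that alpha by (intro powr_mono2 add_mono) auto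
    ultimately show ?thesis using that by (auto simp: step_map_def intro!: mult_mono)
  qed
  moreover have "space ?P = UNIV"
    using sets_eq_imp_space_eq[OF sets] by (simp add: space_pair_measure Theta_def)
  ultimately have sub: "{0<..d} \<times> ({0<..a} \<times> {0<..b}) \<subseteq> step_map \<alpha> -` {0<..?c} \<inter> space ?P"
    by auto
  have "emeasure \<nu> {0<..d} * (emeasure Theta {0<..a} * emeasure Exp1 {0<..b})
      = emeasure ?P ({0<..d} \<times> ({0<..a} \<times> {0<..b}))"
    using sets by (simp add: TE.emeasure_pair_measure_Times sigma_finite_measure.emeasure_pair_measure_Times
        E.sigma_finite_measure)
  also have "\<dots> \<le> emeasure ?P (step_map \<alpha> -` {0<..?c} \<inter> space ?P)"
    by (rule emeasure_mono[OF sub]) measurable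
  also have "\<dots> = emeasure \<nu> {0<..?c}"
    by (subst (2) eq[symmetric]) (subst emeasure_distr, auto)
  finally show ?thesis .
qed

lemma stationary_emeasure_Ioc_pos:
  assumes st: "stationary_dist \<alpha> Theta \<nu>" and y: "0 < y"
  shows "0 < emeasure \<nu> {0<..y}"
proof (rule ccontr)
  assume "\<not> ?thesis"
  then have "emeasure \<nu> {0<..y} = 0" by (simp add: zero_less_iff_neq_zero)
  moreover have sets: "sets \<nu> = sets borel" and "emeasure \<nu> {0<..} = 1"
    using st by (auto simp: stationary_dist_def)
  ultimately obtain c where c: "0 < c"
    and below: "\<And>b. 0 < b \<Longrightarrow> b < c \<Longrightarrow> emeasure \<nu> {0<..b} = 0"
    and above: "\<And>d. c < d \<Longrightarrow> emeasure \<nu> {0<..d} \<noteq> 0"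
    using emeasure_Ioc_threshold[OF sets _ y] by auto
  obtain b where b: "0 < b" "b < 1" "0 < emeasure Theta {0<..b}"
    using emeasure_Theta_pos by blast
  \<comment> \<open>choose \<open>c < d < c / b\<close>, then \<open>e > 0\<close> so small that \<open>b (e + d\<^sup>\<alpha>)\<^sup>1\<^sup>/\<^sup>\<alpha> < c\<close>\<close>
  define d where "d = (c + c / b) / 2"
  have "c < c / b" using c b by (simp add: field_simps)
  then have d: "c < d" "d < c / b" "0 < d" using c b by (simp_all add: d_def field_simps add_pos_pos)
  have d_powr: "d powr \<alpha> < (c / b) powr \<alpha>" using d alpha by (intro powr_less_mono2) auto
  define e where "e = ((c / b) powr \<alpha> - d powr \<alpha>) / 2"
  have e: "0 < e" using d_powr by (simp add: e_def)
  have "e + d powr \<alpha> = ((c / b) powr \<alpha> + d powr \<alpha>) / 2" by (simp add: e_def field_simps)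
  then have "(e + d powr \<alpha>) powr (1 / \<alpha>) < ((c / b) powr \<alpha>) powr (1 / \<alpha>)"
    using d_powr e alpha by (intro powr_less_mono2) auto
  also have "\<dots> = c / b" using c b alpha by (simp add: powr_powr)
  finally have lt: "b * (e + d powr \<alpha>) powr (1 / \<alpha>) < c" using b by (simp add: field_simps)
  have "0 < e + d powr \<alpha>" using e by (simp add: add_pos_nonneg)
  then have "0 < b * (e + d powr \<alpha>) powr (1 / \<alpha>)" using b by simp
  then have "emeasure \<nu> {0<..d} * (emeasure Theta {0<..b} * emeasure Exp1 {0<..e}) = 0"
    using emeasure_step_box[OF st d(3) b(1) e] below[OF _ lt] by simp
  then show False using above[OF d(1)] b emeasure_Exp1_pos[OF e] by (auto simp: zero_less_iff_neq_zero)
qed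

section \<open>The one-step law has a positive density\<close>

definition step_scale :: "real \<Rightarrow> real \<Rightarrow> real" where
  "step_scale x e = (e + x powr \<alpha>) powr (1 / \<alpha>)"

text \<open>The density of \<open>t w\<close>, \<open>t \<sim> Theta\<close>, with respect to \<open>y dy\<close>.\<close>
definition scaled_density :: "real \<Rightarrow> real \<Rightarrow> ennreal" where
  "scaled_density w y = ennreal (indicator {0<..<1} (y / w) * h (y / w) / w\<^sup>2)"

definition step_density :: "real measure \<Rightarrow> real \<Rightarrow> ennreal" where
  "step_density \<nu> y = (\<integral>\<^sup>+ x. \<integral>\<^sup>+ e. scaled_density (step_scale x e) y \<partial>Exp1 \<partial>\<nu>)"

text \<open>The noise that moves \<open>x\<close> to \<open>y\<close> when the multiplicative factor is \<open>t\<close>.\<close>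
definition step_noise :: "real \<Rightarrow> real \<Rightarrow> real \<Rightarrow> real" where
  "step_noise x y t = (y / t) powr \<alpha> - x powr \<alpha>"

lemma measurable_step_scale[measurable (raw)]:
  assumes [measurable]: "f \<in> borel_measurable N" "g \<in> borel_measurable N"
  shows "(\<lambda>z. step_scale (f z) (g z)) \<in> borel_measurable N"
  unfolding step_scale_def by measurable

lemma measurable_scaled_density[measurable (raw)]:
  assumes [measurable]: "f \<in> borel_measurable N" "g \<in> borel_measurable N"
  shows "(\<lambda>z. scaled_density (f z) (g z)) \<in> borel_measurable N"
proof -
  have [measurable]: "(\<lambda>z. h (g z / f z)) \<in> borel_measurable N"
    by (rule measurable_compose[OF _ h_meas]) measurable
  show ?thesis unfolding scaled_density_def by measurable
qed

lemma step_scale_pos: "0 < e \<Longrightarrow> 0 < step_scale x e"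
  using add_pos_nonneg[of e "x powr \<alpha>"] unfolding step_scale_def by simp

lemma step_map_eq_step_scale: "step_map \<alpha> (x, t, e) = t * step_scale x e"
  by (simp add: step_map_def step_scale_def)

lemma Theta_density_scaled:
  assumes w: "0 < w"
  shows "ennreal (1 / w) * ennreal (indicator {0<..<1} (y / w) * h (y / w) * (y / w))
    = ennreal (indicator {0<..} y * y) * scaled_density w y"
proof (cases "0 < y / w \<and> y / w < 1")
  case True
  then have "0 < y" "0 \<le> h (y / w)" using w h_nonneg by (auto simp: zero_less_divide_iff)
  then show ?thesis
    using True w by (simp add: scaled_density_def ennreal_mult[symmetric] power2_eq_square field_simps)
qed (auto simp: scaled_density_def indicator_def)

lemma nn_integral_Theta_scaled:
  assumes w: "0 < w" and A[measurable]: "A \<in> sets borel"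
  shows "(\<integral>\<^sup>+ t. indicator A (t * w) \<partial>Theta)
    = (\<integral>\<^sup>+ y. indicator A y * (ennreal (indicator {0<..} y * y) * scaled_density w y) \<partial>lborel)"
proof -
  have "(\<integral>\<^sup>+ t. indicator A (t * w) \<partial>Theta)
      = (\<integral>\<^sup>+ t. ennreal (indicator {0<..<1} t * h t * t) * indicator A (t * w) \<partial>lborel)"
    unfolding Theta_def by (subst nn_integral_density) auto
  also have "\<dots> = ennreal \<bar>1 / w\<bar> * (\<integral>\<^sup>+ y. ennreal (indicator {0<..<1} (0 + 1 / w * y)
       * h (0 + 1 / w * y) * (0 + 1 / w * y)) * indicator A ((0 + 1 / w * y) * w) \<partial>lborel)"
    by (rule nn_integral_real_affine) (use w in auto)
  also have "\<dots> = (\<integral>\<^sup>+ y. ennreal (1 / w) * ennreal (indicator {0<..<1} (y / w) * h (y / w) * (y / w))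
       * indicator A y \<partial>lborel)"
    using w by (subst nn_integral_cmult[symmetric]) (auto simp: mult.assoc)
  also have "\<dots> = (\<integral>\<^sup>+ y. indicator A y * (ennreal (indicator {0<..} y * y) * scaled_density w y) \<partial>lborel)"
    by (intro nn_integral_cong) (subst Theta_density_scaled[OF w], rule mult.commute)
  finally show ?thesis .
qed

lemma emeasure_step:
  assumes sets[measurable_cong]: "sets \<nu> = sets borel" and "prob_space \<nu>" and A[measurable]: "A \<in> sets borel"
  shows "emeasure (distr (\<nu> \<Otimes>\<^sub>M (Theta \<Otimes>\<^sub>M Exp1)) borel (step_map \<alpha>)) A
    = (\<integral>\<^sup>+ y. indicator A y * (ennreal (indicator {0<..} y * y) * step_density \<nu> y) \<partial>lborel)"
proof -
  interpret TE: prob_space "Theta \<Otimes>\<^sub>M Exp1"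
    by (intro prob_space_pair prob_space_Theta prob_space_Exp1)
  interpret T: prob_space Theta by (rule prob_space_Theta)
  interpret E: prob_space Exp1 by (rule prob_space_Exp1)
  interpret N: prob_space \<nu> by fact
  interpret TEp: pair_sigma_finite Theta Exp1 ..
  interpret ELp: pair_sigma_finite Exp1 lborel ..
  interpret NLp: pair_sigma_finite \<nu> lborel ..
  let ?d = "\<lambda>y. ennreal (indicator {0<..} y * y)"
  have [measurable]: "step_map \<alpha> \<in> borel_measurable (\<nu> \<Otimes>\<^sub>M (Theta \<Otimes>\<^sub>M Exp1))"
    by (rule measurable_step_map) (simp_all add: sets)
  have inner: "(\<integral>\<^sup>+ q. indicator A (step_map \<alpha> (x, q)) \<partial>(Theta \<Otimes>\<^sub>M Exp1))
       = (\<integral>\<^sup>+ y. \<integral>\<^sup>+ e. indicator A y * (?d y * scaled_density (step_scale x e) y) \<partial>Exp1 \<partial>lborel)" for x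
  proof -
    have "(\<integral>\<^sup>+ q. indicator A (step_map \<alpha> (x, q)) \<partial>(Theta \<Otimes>\<^sub>M Exp1))
       = (\<integral>\<^sup>+ e. \<integral>\<^sup>+ t. indicator A (t * step_scale x e) \<partial>Theta \<partial>Exp1)"
      by (subst TEp.nn_integral_snd[symmetric]) (auto simp: step_map_eq_step_scale)
    also have "\<dots> = (\<integral>\<^sup>+ e. \<integral>\<^sup>+ y. indicator A y * (?d y * scaled_density (step_scale x e) y) \<partial>lborel \<partial>Exp1)"
      using AE_Exp1_pos
      by (intro nn_integral_cong_AE) (auto elim!: eventually_mono intro!: nn_integral_Theta_scaled step_scale_pos)
    also have "\<dots> = (\<integral>\<^sup>+ y. \<integral>\<^sup>+ e. indicator A y * (?d y * scaled_density (step_scale x e) y) \<partial>Exp1 \<partial>lborel)"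
      by (subst ELp.Fubini') auto
    finally show ?thesis .
  qed
  have "emeasure (distr (\<nu> \<Otimes>\<^sub>M (Theta \<Otimes>\<^sub>M Exp1)) borel (step_map \<alpha>)) A
     = (\<integral>\<^sup>+ p. indicator A (step_map \<alpha> p) \<partial>(\<nu> \<Otimes>\<^sub>M (Theta \<Otimes>\<^sub>M Exp1)))"
    using nn_integral_distr[of "step_map \<alpha>" _ borel "indicator A"] by simp
  also have "\<dots> = (\<integral>\<^sup>+ x. \<integral>\<^sup>+ q. indicator A (step_map \<alpha> (x, q)) \<partial>(Theta \<Otimes>\<^sub>M Exp1) \<partial>\<nu>)"
    by (subst TE.nn_integral_fst) auto
  also have "\<dots> = (\<integral>\<^sup>+ x. \<integral>\<^sup>+ y. \<integral>\<^sup>+ e. indicator A y * (?d y * scaled_density (step_scale x e) y) \<partial>Exp1 \<partial>lborel \<partial>\<nu>)"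
    unfolding inner ..
  also have "\<dots> = (\<integral>\<^sup>+ y. \<integral>\<^sup>+ x. \<integral>\<^sup>+ e. indicator A y * (?d y * scaled_density (step_scale x e) y) \<partial>Exp1 \<partial>\<nu> \<partial>lborel)"
    by (subst NLp.Fubini') auto
  also have "\<dots> = (\<integral>\<^sup>+ y. indicator A y * (?d y * step_density \<nu> y) \<partial>lborel)"
    unfolding step_density_def by (simp add: nn_integral_cmult mult.assoc)
  finally show ?thesis .
qed

lemma step_noise:
  assumes x: "0 < x" "x \<le> y" and t: "0 < t" "t < 1"
  shows "0 < step_noise x y t" "step_scale x (step_noise x y t) = y / t"
proof -
  have "y < y / t" using x t by (simp add: field_simps)
  then have "y powr \<alpha> < (y / t) powr \<alpha>" using x alpha by (intro powr_less_mono2) auto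
  moreover have "x powr \<alpha> \<le> y powr \<alpha>" using x alpha by (intro powr_mono2) auto
  ultimately show "0 < step_noise x y t" by (simp add: step_noise_def)
  show "step_scale x (step_noise x y t) = y / t"
    using x t alpha by (simp add: step_scale_def step_noise_def powr_powr)
qed

lemma has_real_derivative_step_noise_uminus:
  assumes "s < 0" "0 < y"
  shows "((\<lambda>s. step_noise x y (- s)) has_real_derivative \<alpha> * (y / - s) powr (\<alpha> - 1) * (y / s\<^sup>2)) (at s)"
proof -
  have "((\<lambda>s. y / - s) has_real_derivative y / s\<^sup>2) (at s)"
    using assms by (auto intro!: derivative_eq_intros simp: power2_eq_square field_simps)
  from DERIV_fun_powr[OF this, of \<alpha>] assms
  have "((\<lambda>s. (y / - s) powr \<alpha>) has_real_derivative \<alpha> * (y / - s) powr (\<alpha> - 1) * (y / s\<^sup>2)) (at s)"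
    by (simp add: divide_pos_neg)
  from DERIV_diff[OF this DERIV_const[of "x powr \<alpha>"]] show ?thesis
    by (simp add: step_noise_def)
qed

text \<open>Substituting \<open>e = step_noise x y t\<close> turns the Exp(1)-integral of the scaled density
  at \<open>y\<close> into an integral of \<open>h\<close> over a subinterval of \<open>(0, 1)\<close> with a positive weight.\<close>
lemma nn_integral_scaled_density_pos:
  assumes x: "0 < x" "x \<le> y"
  shows "0 < (\<integral>\<^sup>+ e. scaled_density (step_scale x e) y \<partial>Exp1)"
proof -
  obtain a b where ab: "0 < a" "a < b" "b < 1"
    and pos: "0 < (\<integral>\<^sup>+t. ennreal (h t * t * indicator {a..b} t) \<partial>lborel)"
    by (rule Theta_pos_subinterval)
  have y: "0 < y" using x by simp
  define F where "F e = exponential_density 1 e *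
    (indicator {0<..<1} (y / step_scale x e) * h (y / step_scale x e) / (step_scale x e)\<^sup>2)" for e
  define g where "g s = step_noise x y (- s)" for s
  define g' where "g' s = \<alpha> * (y / - s) powr (\<alpha> - 1) * (y / s\<^sup>2)" for s
  define w where "w s = exp (- g s) * (- s) / y\<^sup>2 * g' s" for s
  have [measurable]: "(\<lambda>e. h (y / step_scale x e)) \<in> borel_measurable borel"
    by (rule measurable_compose[OF _ h_meas]) measurable
  have [measurable]: "F \<in> borel_measurable borel" "g \<in> borel_measurable borel"
    "g' \<in> borel_measurable borel" "w \<in> borel_measurable borel"
    unfolding F_def g_def g'_def w_def step_noise_def by measurable
  have g'_pos: "0 < g' s" if "s \<in> {-b..-a}" for s
    using that ab y alpha by (auto simp: g'_def)
  have w_pos: "0 < w s" if "s \<in> {-b..-a}" for s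
    using g'_pos[OF that] that ab y unfolding w_def by (intro mult_pos_pos divide_pos_pos) auto
  have F_g: "F (g s) * g' s = h (- s) * (- s) * w s" if "s \<in> {-b..-a}" for s
  proof -
    have t: "0 < - s" "- s < 1" using that ab by auto
    have W: "step_scale x (g s) = y / - s" "0 < g s" using step_noise[OF x t] by (auto simp: g_def)
    moreover have "y / step_scale x (g s) = - s" using W t y by simp
    ultimately show ?thesis unfolding F_def w_def
      using t y by (simp only:) (simp add: exponential_density_def power_divide power2_eq_square field_simps)
  qed
  have "(\<integral>\<^sup>+t. ennreal (h t * t * indicator {a..b} t) \<partial>lborel)
      = (\<integral>\<^sup>+s. ennreal (h (- s) * (- s) * indicator {-b..-a} s) \<partial>lborel)"
    by (subst nn_integral_lborel_uminus) (auto intro!: nn_integral_cong simp: indicator_def)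
  then have "0 < (\<integral>\<^sup>+s. ennreal (h (- s) * (- s) * indicator {-b..-a} s) \<partial>lborel)"
    using pos by simp
  then have "0 < (\<integral>\<^sup>+s. ennreal (h (- s) * (- s) * w s * indicator {-b..-a} s) \<partial>lborel)"
    by (rule nn_integral_pos_mult) (auto simp: w_pos)
  also have "\<dots> = (\<integral>\<^sup>+s. ennreal (F (g s) * g' s * indicator {-b..-a} s) \<partial>lborel)"
    by (intro nn_integral_cong) (simp add: F_g indicator_def)
  also have "\<dots> = (\<integral>\<^sup>+e. ennreal (F e * indicator {g (-b)..g (-a)} e) \<partial>lborel)"
  proof (rule nn_integral_substitution[symmetric])
    show "continuous_on {-b..-a} g'"
      unfolding g'_def using ab y by (intro continuous_intros continuous_on_powr) (auto simp: divide_pos_neg)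
    show "(g has_real_derivative g' s) (at s)" if "s \<in> {-b..-a}" for s
      unfolding g_def g'_def using that ab y by (intro has_real_derivative_step_noise_uminus) auto
  qed (use ab g'_pos in \<open>auto simp: set_borel_measurable_def less_imp_le\<close>)
  also have "\<dots> \<le> (\<integral>\<^sup>+ e. ennreal (F e) \<partial>lborel)"
    using h_nonneg by (intro nn_integral_mono ennreal_leI)
      (auto simp: indicator_def F_def exponential_density_nonneg)
  also have "\<dots> = (\<integral>\<^sup>+ e. scaled_density (step_scale x e) y \<partial>Exp1)"
    unfolding Exp1_def
    by (subst nn_integral_density)
      (auto intro!: nn_integral_cong simp: F_def scaled_density_def ennreal_mult[symmetric]
        exponential_density_nonneg h_nonneg indicator_def)
  finally show ?thesis .
qed

lemma measurable_step_density[measurable]: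
  assumes [measurable_cong]: "sets \<nu> = sets borel" and "prob_space \<nu>"
  shows "step_density \<nu> \<in> borel_measurable borel"
proof -
  interpret E: prob_space Exp1 by (rule prob_space_Exp1)
  interpret N: prob_space \<nu> by fact
  have "(\<lambda>(y, x). \<integral>\<^sup>+ e. scaled_density (step_scale x e) y \<partial>Exp1) \<in> borel_measurable (borel \<Otimes>\<^sub>M \<nu>)"
    by measurable
  then show ?thesis unfolding step_density_def[abs_def] by (rule N.borel_measurable_nn_integral)
qed

lemma step_density_pos:
  assumes st: "stationary_dist \<alpha> Theta \<nu>" and y: "0 < y"
  shows "0 < step_density \<nu> y"
proof (rule ccontr)
  interpret E: prob_space Exp1 by (rule prob_space_Exp1)
  assume "\<not> ?thesis"
  then have "step_density \<nu> y = 0" by (simp add: zero_less_iff_neq_zero)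
  moreover have sets[measurable_cong]: "sets \<nu> = sets borel"
    using st by (auto simp: stationary_dist_def)
  ultimately have "AE x in \<nu>. (\<integral>\<^sup>+ e. scaled_density (step_scale x e) y \<partial>Exp1) = 0"
    unfolding step_density_def by (subst (asm) nn_integral_0_iff_AE) auto
  then have "AE x in \<nu>. x \<notin> {0<..y}"
    by (rule eventually_mono) (use nn_integral_scaled_density_pos in fastforce)
  then have "emeasure \<nu> {0<..y} = 0"
    by (subst (asm) AE_iff_measurable[of "{0<..y}"]) (auto simp: sets_eq_imp_space_eq[OF sets])
  with stationary_emeasure_Ioc_pos[OF st y] show False by simp
qed

lemma stationary_eq_density:
  assumes st: "stationary_dist \<alpha> Theta \<nu>"
  shows "\<nu> = density lborel (\<lambda>y. ennreal (indicator {0<..} y * y) * step_density \<nu> y)"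
proof (rule measure_eqI)
  have sets: "sets \<nu> = sets borel" and prob: "prob_space \<nu>"
    and eq: "distr (\<nu> \<Otimes>\<^sub>M (Theta \<Otimes>\<^sub>M Exp1)) borel (step_map \<alpha>) = \<nu>"
    using st by (auto simp: stationary_dist_def)
  have [measurable]: "step_density \<nu> \<in> borel_measurable borel"
    using sets prob by (rule measurable_step_density)
  show "sets \<nu> = sets (density lborel (\<lambda>y. ennreal (indicator {0<..} y * y) * step_density \<nu> y))"
    using sets by simp
  fix A assume "A \<in> sets \<nu>"
  then have [measurable]: "A \<in> sets borel" using sets by simp
  show "emeasure \<nu> A = emeasure (density lborel (\<lambda>y. ennreal (indicator {0<..} y * y) * step_density \<nu> y)) A"
    using emeasure_step[OF sets prob, of A] unfolding eq
    by (subst emeasure_density) (auto intro!: nn_integral_cong simp: mult.commute)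
qed

abbreviation \<mu> :: "real measure" where "\<mu> \<equiv> distr M borel (Xinf \<alpha> eps theta)"

lemma stationary_dist_Xinf: "stationary_dist \<alpha> Theta \<mu>"
  unfolding stationary_dist_def
proof (intro conjI)
  show "prob_space \<mu>" by (rule prob_space_distr) simp
  have "emeasure \<mu> {0<..} = emeasure M {\<omega> \<in> space M. 0 < Xinf \<alpha> eps theta \<omega>}"
    by (subst emeasure_distr) (auto intro!: arg_cong[where f="emeasure M"])
  also have "\<dots> = 1" using AE_Xinf_pos by (subst emeasure_eq_1_AE) auto
  finally show "emeasure \<mu> {0<..} = 1" .
qed (simp_all add: distr_Xinf_step)

lemma Xinf_density:
  "\<exists>f. f \<in> borel_measurable borel \<and> (\<forall>x. f x \<ge> 0)
     \<and> \<mu> = density lborel (\<lambda>x. ennreal (indicator {0<..} x * x * f x))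
     \<and> (AE x in lborel. 0 < x \<longrightarrow> 0 < f x)"
proof -
  define g where "g = step_density \<mu>"
  interpret N: prob_space \<mu> by (rule prob_space_distr) simp
  have [measurable]: "g \<in> borel_measurable borel"
    unfolding g_def using stationary_dist_Xinf
    by (intro measurable_step_density) (auto simp: stationary_dist_def)
  have \<mu>: "\<mu> = density lborel (\<lambda>y. ennreal (indicator {0<..} y * y) * g y)"
    unfolding g_def by (rule stationary_eq_density[OF stationary_dist_Xinf])
  have "(\<integral>\<^sup>+ y. ennreal (indicator {0<..} y * y) * g y \<partial>lborel) = 1"
    using N.emeasure_space_1 \<mu> emeasure_density[of "\<lambda>y. ennreal (indicator {0<..} y * y) * g y" lborel UNIV]
    by simp
  then have "AE y in lborel. ennreal (indicator {0<..} y * y) * g y \<noteq> \<infinity>"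
    by (intro nn_integral_PInf_AE) auto
  then have finite: "AE y in lborel. 0 < y \<longrightarrow> g y \<noteq> \<infinity>"
    by (rule eventually_mono) (auto simp: ennreal_mult_eq_top_iff)
  show ?thesis
  proof (intro exI conjI)
    show "(\<lambda>y. enn2real (g y)) \<in> borel_measurable borel" by measurable
    show "\<forall>y. 0 \<le> enn2real (g y)" by simp
    show "\<mu> = density lborel (\<lambda>y. ennreal (indicator {0<..} y * y * enn2real (g y)))"
      by (subst \<mu>, rule density_cong)
        (use finite in \<open>auto elim!: eventually_mono simp: ennreal_mult ennreal_enn2real_if indicator_def\<close>)
    show "AE y in lborel. 0 < y \<longrightarrow> 0 < enn2real (g y)"
      using finite unfolding g_def by (rule eventually_mono)
        (use step_density_pos[OF stationary_dist_Xinf] in \<open>auto simp: enn2real_positive_iff top.not_eq_extremum\<close>)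
  qed
qed

section \<open>Uniqueness of the stationary law\<close>

definition char_powr :: "real measure \<Rightarrow> real \<Rightarrow> complex" where
  "char_powr \<nu> = char (distr \<nu> borel (\<lambda>x. x powr \<alpha>))"

lemma
  assumes sets: "sets \<nu> = sets borel" and prob: "prob_space \<nu>"
  shows real_distribution_powr: "real_distribution (distr \<nu> borel (\<lambda>x. x powr \<alpha>))"
    and char_powr_eq: "char_powr \<nu> u = (\<integral>x. iexp (u * x powr \<alpha>) \<partial>\<nu>)"
proof -
  have [measurable]: "(\<lambda>x. x powr \<alpha>) \<in> borel_measurable \<nu>"
    by (simp add: measurable_cong_sets[OF sets refl])
  show "real_distribution (distr \<nu> borel (\<lambda>x. x powr \<alpha>))"
    using prob_space.real_distribution_distr[OF prob] by simp
  show "char_powr \<nu> u = (\<integral>x. iexp (u * x powr \<alpha>) \<partial>\<nu>)"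
    unfolding char_powr_def char_def by (subst integral_distr) auto
qed

lemma iexp_step_map:
  assumes "0 \<le> t" "0 \<le> e + x powr \<alpha>"
  shows "iexp (s * step_map \<alpha> (x, t, e) powr \<alpha>) = iexp (s * t powr \<alpha> * e) * iexp (s * t powr \<alpha> * x powr \<alpha>)"
proof -
  have "step_map \<alpha> (x, t, e) powr \<alpha> = t powr \<alpha> * (e + x powr \<alpha>)"
    unfolding step_map_def using assms by (simp add: powr_mult powr_inverse_powr alpha)
  then show ?thesis by (simp add: distrib_left exp_add mult.assoc)
qed

lemma AE_step_args_pos:
  assumes "prob_space \<nu>"
  shows "AE p in \<nu> \<Otimes>\<^sub>M (Theta \<Otimes>\<^sub>M Exp1). 0 < fst (snd p) \<and> 0 < snd (snd p)"
proof -
  interpret T: prob_space Theta by (rule prob_space_Theta)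
  interpret E: prob_space Exp1 by (rule prob_space_Exp1)
  interpret TE: pair_prob_space Theta Exp1 ..
  interpret N: prob_space \<nu> by fact
  interpret NTE: pair_prob_space \<nu> "Theta \<Otimes>\<^sub>M Exp1" ..
  have AE_TE: "AE q in Theta \<Otimes>\<^sub>M Exp1. 0 < fst q \<and> 0 < snd q"
  proof (rule TE.AE_pair_measure)
    show "{q \<in> space (Theta \<Otimes>\<^sub>M Exp1). 0 < fst q \<and> 0 < snd q} \<in> sets (Theta \<Otimes>\<^sub>M Exp1)"
      by measurable
  qed (use AE_Theta AE_Exp1_pos in \<open>auto elim!: eventually_mono\<close>)
  show ?thesis
  proof (rule NTE.AE_pair_measure)
    show "{p \<in> space (\<nu> \<Otimes>\<^sub>M (Theta \<Otimes>\<^sub>M Exp1)). 0 < fst (snd p) \<and> 0 < snd (snd p)}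
        \<in> sets (\<nu> \<Otimes>\<^sub>M (Theta \<Otimes>\<^sub>M Exp1))"
      by measurable
    show "AE x in \<nu>. AE y in Theta \<Otimes>\<^sub>M Exp1. 0 < fst (snd (x, y)) \<and> 0 < snd (snd (x, y))"
      by (rule AE_I2) (use AE_TE in simp)
  qed
qed

text \<open>One step of the chain multiplies \<open>X\<^sup>\<alpha>\<close> by \<open>\<theta>\<^sup>\<alpha>\<close> after adding the independent \<open>\<epsilon>\<close>.\<close>
lemma char_powr_step:
  assumes sets[measurable_cong]: "sets \<nu> = sets borel" and prob: "prob_space \<nu>"
  shows "char_powr (distr (\<nu> \<Otimes>\<^sub>M (Theta \<Otimes>\<^sub>M Exp1)) borel (step_map \<alpha>)) s
    = (\<integral>t. char Exp1 (s * t powr \<alpha>) * char_powr \<nu> (s * t powr \<alpha>) \<partial>Theta)"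
proof -
  interpret TE: prob_space "Theta \<Otimes>\<^sub>M Exp1"
    by (intro prob_space_pair prob_space_Theta prob_space_Exp1)
  interpret N: prob_space \<nu> by (rule prob)
  interpret NTE: pair_prob_space \<nu> "Theta \<Otimes>\<^sub>M Exp1" ..
  interpret T: prob_space Theta by (rule prob_space_Theta)
  interpret E: prob_space Exp1 by (rule prob_space_Exp1)
  interpret TEp: pair_prob_space Theta Exp1 ..
  let ?P = "\<nu> \<Otimes>\<^sub>M (Theta \<Otimes>\<^sub>M Exp1)"
  define F where "F p = iexp (s * fst (snd p) powr \<alpha> * snd (snd p)) * iexp (s * fst (snd p) powr \<alpha> * fst p powr \<alpha>)"
    for p :: "real \<times> real \<times> real"
  have [measurable]: "F \<in> borel_measurable ?P" unfolding F_def by measurable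
  have [measurable]: "step_map \<alpha> \<in> borel_measurable ?P"
    by (rule measurable_step_map) (simp_all add: sets)
  have [measurable]: "char_powr \<nu> \<in> borel_measurable borel"
    unfolding char_powr_def by (rule real_distribution.char_measurable[OF real_distribution_powr[OF sets prob]])
  have bounded: "norm (char_powr \<nu> u) \<le> 1" for u
    using real_distribution.cmod_char_le_1[OF real_distribution_powr[OF sets prob]]
    by (simp add: char_powr_def)
  have AE_F: "AE p in ?P. iexp (s * step_map \<alpha> p powr \<alpha>) = F p"
    using AE_step_args_pos[OF prob]
  proof (rule eventually_mono)
    fix p :: "real \<times> real \<times> real" assume pos: "0 < fst (snd p) \<and> 0 < snd (snd p)"
    obtain x t e where p: "p = (x, t, e)" by (cases p)
    show "iexp (s * step_map \<alpha> p powr \<alpha>) = F p"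
      unfolding p F_def fst_conv snd_conv by (rule iexp_step_map) (use pos p in auto)
  qed
  have "char_powr (distr ?P borel (step_map \<alpha>)) s = (\<integral>x. iexp (s * x powr \<alpha>) \<partial>distr ?P borel (step_map \<alpha>))"
    by (rule char_powr_eq) (auto intro: NTE.prob_space_distr)
  also have "\<dots> = (\<integral>p. iexp (s * step_map \<alpha> p powr \<alpha>) \<partial>?P)"
    by (rule integral_distr) simp_all
  also have "\<dots> = (\<integral>p. F p \<partial>?P)"
    using AE_F by (rule integral_cong_AE[rotated 2]) (simp_all add: F_def)
  also have "\<dots> = (\<integral>q. (\<integral>x. F (x, q) \<partial>\<nu>) \<partial>(Theta \<Otimes>\<^sub>M Exp1))"
  proof -
    have "integrable ?P F" by (rule NTE.integrable_const_bound[where B=1]) (auto simp: F_def norm_mult)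
    then show ?thesis using NTE.integral_snd[of "\<lambda>x q. F (x, q)"] by simp
  qed
  also have "\<dots> = (\<integral>q. iexp (s * fst q powr \<alpha> * snd q) * char_powr \<nu> (s * fst q powr \<alpha>) \<partial>(Theta \<Otimes>\<^sub>M Exp1))"
    by (intro Bochner_Integration.integral_cong) (simp_all add: F_def char_powr_eq[OF sets prob])
  also have "\<dots> = (\<integral>t. (\<integral>e. iexp (s * t powr \<alpha> * e) * char_powr \<nu> (s * t powr \<alpha>) \<partial>Exp1) \<partial>Theta)"
  proof -
    define G where "G q = iexp (s * fst q powr \<alpha> * snd q) * char_powr \<nu> (s * fst q powr \<alpha>)"
      for q :: "real \<times> real"
    have "integrable (Theta \<Otimes>\<^sub>M Exp1) G"
      unfolding G_def by (rule TE.integrable_const_bound[where B=1]) (auto simp: norm_mult bounded)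
    from TEp.integral_fst'[OF this] show ?thesis unfolding G_def fst_conv snd_conv by (rule sym)
  qed
  also have "\<dots> = (\<integral>t. char Exp1 (s * t powr \<alpha>) * char_powr \<nu> (s * t powr \<alpha>) \<partial>Theta)"
    by (simp add: char_def)
  finally show ?thesis .
qed

lemma char_powr_stationary:
  assumes st: "stationary_dist \<alpha> Theta \<nu>"
  shows "char_powr \<nu> s = (\<integral>t. char Exp1 (s * t powr \<alpha>) * char_powr \<nu> (s * t powr \<alpha>) \<partial>Theta)"
  using char_powr_step[of \<nu> s] st by (simp add: stationary_dist_def)

lemma norm_char_powr_diff_le:
  assumes st1: "stationary_dist \<alpha> Theta \<nu>1" and st2: "stationary_dist \<alpha> Theta \<nu>2"
  defines "D \<equiv> \<lambda>u. char_powr \<nu>1 u - char_powr \<nu>2 u"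
  shows "norm (D u) \<le> (\<integral>t. norm (D (u * t powr \<alpha>)) \<partial>Theta)"
proof -
  interpret T: prob_space Theta by (rule prob_space_Theta)
  have dist: "real_distribution (distr \<nu>1 borel (\<lambda>x. x powr \<alpha>))"
    "real_distribution (distr \<nu>2 borel (\<lambda>x. x powr \<alpha>))"
    using st1 st2 by (auto simp: stationary_dist_def intro!: real_distribution_powr)
  note char_props = real_distribution.cmod_char_le_1 real_distribution.char_measurable
  have [measurable]: "char_powr \<nu>1 \<in> borel_measurable borel" "char_powr \<nu>2 \<in> borel_measurable borel"
    "char Exp1 \<in> borel_measurable borel"
    using dist real_distribution_Exp1 by (auto simp: char_powr_def intro: char_props)
  have "norm (char_powr \<nu>1 v) \<le> 1" "norm (char_powr \<nu>2 v) \<le> 1" for v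
    using dist by (auto simp: char_powr_def intro: char_props(1))
  then have D_bound: "norm (D v) \<le> 2" for v
    using norm_triangle_ineq4[of "char_powr \<nu>1 v" "char_powr \<nu>2 v"] unfolding D_def
    by (smt (verit))
  have Exp1_bound: "norm (char Exp1 v) \<le> 1" for v
    by (rule real_distribution.cmod_char_le_1[OF real_distribution_Exp1])
  have integrable: "integrable Theta (\<lambda>t. char Exp1 (u * t powr \<alpha>) * char_powr \<nu> (u * t powr \<alpha>))"
    if dist\<nu>: "real_distribution (distr \<nu> borel (\<lambda>x. x powr \<alpha>))" for \<nu>
  proof (rule T.integrable_const_bound[where B=1])
    show "AE t in Theta. norm (char Exp1 (u * t powr \<alpha>) * char_powr \<nu> (u * t powr \<alpha>)) \<le> 1"
      using Exp1_bound char_props(1)[OF dist\<nu>]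
      by (intro AE_I2) (simp add: norm_mult char_powr_def mult_le_one)
    have [measurable]: "char_powr \<nu> \<in> borel_measurable borel"
      using dist\<nu> by (simp add: char_powr_def char_props(2))
    show "(\<lambda>t. char Exp1 (u * t powr \<alpha>) * char_powr \<nu> (u * t powr \<alpha>)) \<in> borel_measurable Theta"
      by measurable
  qed
  have "D u = (\<integral>t. char Exp1 (u * t powr \<alpha>) * D (u * t powr \<alpha>) \<partial>Theta)"
    unfolding D_def char_powr_stationary[OF st1, of u] char_powr_stationary[OF st2, of u]
    using dist by (subst Bochner_Integration.integral_diff[symmetric])
      (auto intro!: integrable simp: algebra_simps)
  also have "norm \<dots> \<le> (\<integral>t. norm (char Exp1 (u * t powr \<alpha>) * D (u * t powr \<alpha>)) \<partial>Theta)"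
    by (rule integral_norm_bound)
  also have "\<dots> \<le> (\<integral>t. norm (D (u * t powr \<alpha>)) \<partial>Theta)"
  proof (rule integral_mono)
    show pointwise: "norm (char Exp1 (u * t powr \<alpha>) * D (u * t powr \<alpha>)) \<le> norm (D (u * t powr \<alpha>))" for t
      using Exp1_bound[of "u * t powr \<alpha>"] by (simp add: norm_mult mult_left_le_one_le)
    show "integrable Theta (\<lambda>t. norm (char Exp1 (u * t powr \<alpha>) * D (u * t powr \<alpha>)))"
      using order.trans[OF pointwise D_bound] unfolding D_def
      by (intro T.integrable_const_bound[where B=2]) auto
    show "integrable Theta (\<lambda>t. norm (D (u * t powr \<alpha>)))"
      using D_bound unfolding D_def by (intro T.integrable_const_bound[where B=2]) auto
  qed
  finally show ?thesis .
qed

lemma char_powr_stationary_unique: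
  assumes st1: "stationary_dist \<alpha> Theta \<nu>1" and st2: "stationary_dist \<alpha> Theta \<nu>2"
  shows "char_powr \<nu>1 = char_powr \<nu>2"
proof
  fix s
  have dist: "real_distribution (distr \<nu>1 borel (\<lambda>x. x powr \<alpha>))"
    "real_distribution (distr \<nu>2 borel (\<lambda>x. x powr \<alpha>))"
    using st1 st2 by (auto simp: stationary_dist_def intro!: real_distribution_powr)
  have cont: "continuous_on UNIV (\<lambda>u. char_powr \<nu>1 u - char_powr \<nu>2 u)"
    using dist by (auto intro!: continuous_at_imp_continuous_on continuous_intros
        real_distribution.isCont_char simp: char_powr_def)
  have zero: "char_powr \<nu>1 0 - char_powr \<nu>2 0 = 0"
    using dist by (simp add: char_powr_def real_distribution.char_zero)
  have contr: "AE t in Theta. \<bar>t powr \<alpha>\<bar> < 1"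
    using AE_Theta by (rule eventually_mono) (use alpha in \<open>auto simp: powr01_less_one\<close>)
  have "char_powr \<nu>1 s - char_powr \<nu>2 s = 0"
    by (rule zero_if_norm_le_integral_contraction[where D="\<lambda>u. char_powr \<nu>1 u - char_powr \<nu>2 u",
          OF prob_space_Theta cont zero _ contr norm_char_powr_diff_le[OF st1 st2]]) simp
  then show "char_powr \<nu>1 s = char_powr \<nu>2 s" by simp
qed

lemma stationary_unique:
  assumes st1: "stationary_dist \<alpha> Theta \<nu>1" and st2: "stationary_dist \<alpha> Theta \<nu>2"
  shows "\<nu>1 = \<nu>2"
proof -
  have inverse: "distr (distr \<nu> borel (\<lambda>x. x powr \<alpha>)) borel (\<lambda>y. y powr (1 / \<alpha>)) = \<nu>"
    if st: "stationary_dist \<alpha> Theta \<nu>" for \<nu>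
  proof -
    have sets: "sets \<nu> = sets borel" and "prob_space \<nu>" and "emeasure \<nu> {0<..} = 1"
      using st by (auto simp: stationary_dist_def)
    then interpret N: prob_space \<nu> by simp
    have [measurable]: "(\<lambda>x. x powr \<alpha>) \<in> borel_measurable \<nu>"
      by (simp add: measurable_cong_sets[OF sets refl])
    have "AE x in \<nu>. x \<in> {0<..}"
      by (rule N.AE_prob_1) (simp add: \<open>emeasure \<nu> {0<..} = 1\<close> measure_def)
    then have "distr (distr \<nu> borel (\<lambda>x. x powr \<alpha>)) borel (\<lambda>y. y powr (1 / \<alpha>)) = distr \<nu> borel (\<lambda>x. x)"
      using alpha by (subst distr_distr) (auto intro!: distr_cong_AE elim!: eventually_mono
          simp: comp_def powr_powr measurable_cong_sets[OF sets refl])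
    also have "\<dots> = distr \<nu> \<nu> (\<lambda>x. x)" by (rule distr_cong) (auto simp: sets)
    also have "\<dots> = \<nu>" by (rule distr_id)
    finally show ?thesis .
  qed
  have "distr \<nu>1 borel (\<lambda>x. x powr \<alpha>) = distr \<nu>2 borel (\<lambda>x. x powr \<alpha>)"
    using st1 st2 char_powr_stationary_unique[OF st1 st2]
    by (intro Levy_uniqueness real_distribution_powr) (auto simp: stationary_dist_def char_powr_def)
  then show ?thesis using inverse[OF st1] inverse[OF st2] by metis
qed

end

theorem lemma3p4:
  fixes M :: "'a measure" and \<alpha> :: real and h :: "real \<Rightarrow> real"
    and eps theta :: "nat \<Rightarrow> 'a \<Rightarrow> real"
  assumes M: "prob_space M"
    and alpha: "\<alpha> > 0"
    and h_meas: "h \<in> borel_measurable borel"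
    and h_nonneg: "\<And>r. 0 < r \<Longrightarrow> r < 1 \<Longrightarrow> h r \<ge> 0"
    and h_norm: "(\<integral>\<^sup>+ r. ennreal (indicator {0<..<1} r * h r * r) \<partial>lborel) = 1"
    and indep: "prob_space.indep_vars M (\<lambda>_. borel)
                  (\<lambda>i. case i of Inl n \<Rightarrow> eps n | Inr n \<Rightarrow> theta n)
                  (Inl ` {1..} \<union> Inr ` {1..})"
    and eps_exp: "\<And>n. n \<ge> 1 \<Longrightarrow>
                    distributed M lborel (eps n) (\<lambda>x. ennreal (exponential_density 1 x))"
    and theta_range: "\<And>n. n \<ge> 1 \<Longrightarrow> AE x in M. 0 < theta n x \<and> theta n x < 1"
    and theta_cdf: "\<And>n r. n \<ge> 1 \<Longrightarrow> 0 < r \<Longrightarrow> r < 1 \<Longrightarrow>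
                    ennreal (measure M {x \<in> space M. theta n x \<le> r})
                      = (\<integral>\<^sup>+ z. ennreal (indicator {0<..r} z * h z * z) \<partial>lborel)"
  defines "\<mu> \<equiv> distr M borel (Xinf \<alpha> eps theta)"
    and "Theta \<equiv> distr M borel (theta 1)"
  shows "(AE x in M. summable (Xterm \<alpha> eps theta x))
    \<and> distr (\<mu> \<Otimes>\<^sub>M (Theta \<Otimes>\<^sub>M Exp1)) borel (step_map \<alpha>) = \<mu>
    \<and> 0 \<le> (\<integral>x. theta 1 x powr \<alpha> \<partial>M) \<and> (\<integral>x. theta 1 x powr \<alpha> \<partial>M) < 1
    \<and> integrable M (\<lambda>x. Xinf \<alpha> eps theta x powr \<alpha>)
    \<and> (\<integral>x. Xinf \<alpha> eps theta x powr \<alpha> \<partial>M)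
        = (\<integral>x. theta 1 x powr \<alpha> \<partial>M) / (1 - (\<integral>x. theta 1 x powr \<alpha> \<partial>M))
    \<and> (\<exists>f. f \<in> borel_measurable borel \<and> (\<forall>x. f x \<ge> 0)
          \<and> \<mu> = density lborel (\<lambda>x. ennreal (indicator {0<..} x * x * f x))
          \<and> (AE x in lborel. 0 < x \<longrightarrow> 0 < f x))
    \<and> stationary_dist \<alpha> Theta \<mu>
    \<and> (\<forall>\<nu>. stationary_dist \<alpha> Theta \<nu> \<longrightarrow> \<nu> = \<mu>)"
proof -
  have \<mu>: "\<mu> = distr M borel (Xinf \<alpha> eps theta)" and "Theta = distr M borel (theta 1)"
    unfolding \<mu>_def Theta_def by (rule refl)+
  interpret perpetuity M \<alpha> h eps theta
    by (intro perpetuity.intro perpetuity_axioms.intro) (fact assms)+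
  have "Theta = perpetuity.Theta h" using \<open>Theta = distr M borel (theta 1)\<close> distr_theta by simp
  then show ?thesis
    unfolding \<mu> moment_def[symmetric]
    using AE_summable_Xterm stationary_dist_Xinf moment_nonneg moment_less_1 integrable_Xinf_powr
      integral_Xinf_powr Xinf_density stationary_unique[OF _ stationary_dist_Xinf]
    by (simp add: stationary_dist_def)
qed

end
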